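(* Let $(X,\mathcal U)$ be a non-archimedean uniform space and $\mathcal B$ a base of $\mathcal U$ consisting of equivalence relations. Realize $F_{NA}(X,\mathcal U)$ and $F^b_{NA}(X,\mathcal U)$ on the abstract free group $F(X)$ with $i(x)=x$. Then: (1) the family of subgroups $\{[V_\psi]:\psi\in\mathcal B^{F(X)}\}$ is a base of neighborhoods of the identity in $F_{NA}(X,\mathcal U)$; (2)(a) the family of normal subgroups $\{[\tilde\varepsilon]:\varepsilon\in\mathcal B\}$ is a base of neighborhoods of the identity in $F^b_{NA}(X,\mathcal U)$; (b) the topology of $F^b_{NA}(X,\mathcal U)$ is the weak topology generated by the homomorphisms $\overline{f_\varepsilon}\colon F(X)\to F(X/\varepsilon)$, $\varepsilon\in\mathcal B$, where each $F(X/\varepsilon)$ is discrete.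
   Context: A uniform space is non-archimedean if its uniformity has a base of equivalence relations. A topological group is non-archimedean if it has a local base at the identity of open subgroups, balanced if its left and right uniformities coincide. $F_{NA}(X,\mathcal U)$ (resp. $F^b_{NA}(X,\mathcal U)$) is the non-archimedean (resp. balanced non-archimedean) Hausdorff group with uniformly continuous $i\colon X\to G$ (two-sided uniformity) through which every uniformly continuous map into such a group factors uniquely by a continuous homomorphism; both are algebraically free on $i(X)$. In $F(X)$ let $j_2(\varepsilon)=\{x^{-1}y:(x,y)\in\varepsilon\}$, $j_2^*(\varepsilon)=\{xy^{-1}:(x,y)\in\varepsilon\}$; for $\psi\colon F(X)\to\mathcal B$ let $V_\psi=\bigcup_{w\in F(X)} w\big(j_2(\psi(w))\cup j_2^*(\psi(w))\big)w^{-1}$, and $\tilde\varepsilon=\bigcup_{w\in F(X)} w\big(j_2(\varepsilon)\cup j_2^*(\varepsilon)\big)w^{-1}$. For a symmetric set $A$, $[A]=\bigcup_n A^n$ is the subgroup it generates. $X/\varepsilon$ is the quotient set, $f_\varepsilon\colon X\to X/\varepsilon$ the quotient map, and $\overline{f_\varepsilon}\colon F(X)\to F(X/\varepsilon)$ its homomorphic extension. *)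

theory Defs
  imports "HOL-Analysis.Analysis" "HOL-Algebra.Algebra"
begin

definition uniformity_on_set :: "'a set \<Rightarrow> ('a \<times> 'a) set set \<Rightarrow> bool" where
  "uniformity_on_set S U \<longleftrightarrow>
     U \<noteq> {} \<and>
     (\<forall>E\<in>U. E \<subseteq> S \<times> S \<and> Id_on S \<subseteq> E \<and> converse E \<in> U \<and> (\<exists>D\<in>U. relcomp D D \<subseteq> E)) \<and>
     (\<forall>E\<in>U. \<forall>D\<in>U. E \<inter> D \<in> U) \<and>
     (\<forall>E\<in>U. \<forall>D. E \<subseteq> D \<and> D \<subseteq> S \<times> S \<longrightarrow> D \<in> U)"

definition is_base :: "('a \<times> 'a) set set \<Rightarrow> ('a \<times> 'a) set set \<Rightarrow> bool" where
  "is_base U B \<longleftrightarrow> B \<subseteq> U \<and> (\<forall>E\<in>U. \<exists>e\<in>B. e \<subseteq> E)"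

definition unif_continuous ::
  "'a set \<Rightarrow> ('a \<times> 'a) set set \<Rightarrow> ('b \<times> 'b) set set \<Rightarrow> ('a \<Rightarrow> 'b) \<Rightarrow> bool" where
  "unif_continuous S U V f \<longleftrightarrow> (\<forall>E\<in>V. \<exists>D\<in>U. \<forall>(x,y)\<in>D. (f x, f y) \<in> E)"

definition topgroup :: "('g, 'm) monoid_scheme \<Rightarrow> 'g topology \<Rightarrow> bool" where
  "topgroup G T \<longleftrightarrow> group G \<and> topspace T = carrier G \<and>
     continuous_map (prod_topology T T) T (\<lambda>p. fst p \<otimes>\<^bsub>G\<^esub> snd p) \<and>
     continuous_map T T (\<lambda>x. inv\<^bsub>G\<^esub> x)"

definition nbhd1 :: "('g, 'm) monoid_scheme \<Rightarrow> 'g topology \<Rightarrow> 'g set \<Rightarrow> bool" where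
  "nbhd1 G T V \<longleftrightarrow> V \<subseteq> topspace T \<and> (\<exists>W. openin T W \<and> \<one>\<^bsub>G\<^esub> \<in> W \<and> W \<subseteq> V)"

definition nonarch_group :: "('g, 'm) monoid_scheme \<Rightarrow> 'g topology \<Rightarrow> bool" where
  "nonarch_group G T \<longleftrightarrow> topgroup G T \<and>
     (\<forall>V. nbhd1 G T V \<longrightarrow> (\<exists>H. subgroup H G \<and> openin T H \<and> H \<subseteq> V))"

definition left_unif :: "('g, 'm) monoid_scheme \<Rightarrow> 'g topology \<Rightarrow> ('g \<times> 'g) set set" where
  "left_unif G T = {E. E \<subseteq> carrier G \<times> carrier G \<and> (\<exists>V. nbhd1 G T V \<and>
      {(g,h). g \<in> carrier G \<and> h \<in> carrier G \<and> inv\<^bsub>G\<^esub> g \<otimes>\<^bsub>G\<^esub> h \<in> V} \<subseteq> E)}"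

definition right_unif :: "('g, 'm) monoid_scheme \<Rightarrow> 'g topology \<Rightarrow> ('g \<times> 'g) set set" where
  "right_unif G T = {E. E \<subseteq> carrier G \<times> carrier G \<and> (\<exists>V. nbhd1 G T V \<and>
      {(g,h). g \<in> carrier G \<and> h \<in> carrier G \<and> h \<otimes>\<^bsub>G\<^esub> inv\<^bsub>G\<^esub> g \<in> V} \<subseteq> E)}"

definition two_sided_unif :: "('g, 'm) monoid_scheme \<Rightarrow> 'g topology \<Rightarrow> ('g \<times> 'g) set set" where
  "two_sided_unif G T = {E. E \<subseteq> carrier G \<times> carrier G \<and> (\<exists>V. nbhd1 G T V \<and>
      {(g,h). g \<in> carrier G \<and> h \<in> carrier G \<and> inv\<^bsub>G\<^esub> g \<otimes>\<^bsub>G\<^esub> h \<in> V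
              \<and> h \<otimes>\<^bsub>G\<^esub> inv\<^bsub>G\<^esub> g \<in> V} \<subseteq> E)}"

definition balanced_group :: "('g, 'm) monoid_scheme \<Rightarrow> 'g topology \<Rightarrow> bool" where
  "balanced_group G T \<longleftrightarrow> left_unif G T = right_unif G T"

type_synonym 'a word = "('a \<times> bool) list"

definition canceling :: "'a \<times> bool \<Rightarrow> 'a \<times> bool \<Rightarrow> bool" where
  "canceling p q \<longleftrightarrow> fst p = fst q \<and> snd p \<noteq> snd q"

definition reduced :: "'a word \<Rightarrow> bool" where
  "reduced w \<longleftrightarrow> (\<forall>i. Suc i < length w \<longrightarrow> \<not> canceling (w ! i) (w ! Suc i))"

definition reduce :: "'a word \<Rightarrow> 'a word" where
  "reduce w = foldr (\<lambda>x acc. case acc of [] \<Rightarrow> [x]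
                      | y # ys \<Rightarrow> (if canceling x y then ys else x # acc)) w []"

text \<open>F(S): reduced words over the letters x (True) and x^-1 (False), x in S.\<close>
definition free_group :: "'a set \<Rightarrow> 'a word monoid" where
  "free_group S = \<lparr>carrier = {w. fst ` set w \<subseteq> S \<and> reduced w},
                   mult = (\<lambda>u v. reduce (u @ v)), one = []\<rparr>"

definition ins :: "'a \<Rightarrow> 'a word" where
  "ins x = [(x, True)]"

text \<open>Target groups in the universal property range over groups whose elements
  are sets of words; every Hausdorff group receiving a homomorphism from F(S)
  contains the image, which is isomorphic to a quotient of F(S), i.e. a group of
  such sets, so this is no restriction.\<close>
definition is_FNA :: "'a set \<Rightarrow> ('a \<times> 'a) set set \<Rightarrow> 'a word topology \<Rightarrow> bool" where
  "is_FNA S U T \<longleftrightarrow>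
     nonarch_group (free_group S) T \<and> Hausdorff_space T \<and>
     unif_continuous S U (two_sided_unif (free_group S) T) ins \<and>
     (\<forall>(G :: 'a word set monoid) TG f.
        nonarch_group G TG \<and> Hausdorff_space TG \<and> f \<in> S \<rightarrow> carrier G \<and>
        unif_continuous S U (two_sided_unif G TG) f \<longrightarrow>
        (\<exists>h. h \<in> hom (free_group S) G \<and> continuous_map T TG h \<and> (\<forall>x\<in>S. h (ins x) = f x) \<and>
           (\<forall>h'. h' \<in> hom (free_group S) G \<and> continuous_map T TG h' \<and>
                 (\<forall>x\<in>S. h' (ins x) = f x) \<longrightarrow> (\<forall>w\<in>carrier (free_group S). h' w = h w))))"

definition is_FNA_b :: "'a set \<Rightarrow> ('a \<times> 'a) set set \<Rightarrow> 'a word topology \<Rightarrow> bool" where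
  "is_FNA_b S U T \<longleftrightarrow>
     nonarch_group (free_group S) T \<and> balanced_group (free_group S) T \<and> Hausdorff_space T \<and>
     unif_continuous S U (two_sided_unif (free_group S) T) ins \<and>
     (\<forall>(G :: 'a word set monoid) TG f.
        nonarch_group G TG \<and> balanced_group G TG \<and> Hausdorff_space TG \<and> f \<in> S \<rightarrow> carrier G \<and>
        unif_continuous S U (two_sided_unif G TG) f \<longrightarrow>
        (\<exists>h. h \<in> hom (free_group S) G \<and> continuous_map T TG h \<and> (\<forall>x\<in>S. h (ins x) = f x) \<and>
           (\<forall>h'. h' \<in> hom (free_group S) G \<and> continuous_map T TG h' \<and>
                 (\<forall>x\<in>S. h' (ins x) = f x) \<longrightarrow> (\<forall>w\<in>carrier (free_group S). h' w = h w))))"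

definition j2 :: "'a set \<Rightarrow> ('a \<times> 'a) set \<Rightarrow> 'a word set" where
  "j2 S e = {inv\<^bsub>free_group S\<^esub> (ins x) \<otimes>\<^bsub>free_group S\<^esub> ins y | x y. (x, y) \<in> e}"

definition j2s :: "'a set \<Rightarrow> ('a \<times> 'a) set \<Rightarrow> 'a word set" where
  "j2s S e = {ins x \<otimes>\<^bsub>free_group S\<^esub> inv\<^bsub>free_group S\<^esub> (ins y) | x y. (x, y) \<in> e}"

definition V_psi :: "'a set \<Rightarrow> ('a word \<Rightarrow> ('a \<times> 'a) set) \<Rightarrow> 'a word set" where
  "V_psi S \<psi> = (\<Union>w\<in>carrier (free_group S).
      {w \<otimes>\<^bsub>free_group S\<^esub> a \<otimes>\<^bsub>free_group S\<^esub> inv\<^bsub>free_group S\<^esub> w | a.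
         a \<in> j2 S (\<psi> w) \<union> j2s S (\<psi> w)})"

definition eps_tilde :: "'a set \<Rightarrow> ('a \<times> 'a) set \<Rightarrow> 'a word set" where
  "eps_tilde S e = (\<Union>w\<in>carrier (free_group S).
      {w \<otimes>\<^bsub>free_group S\<^esub> a \<otimes>\<^bsub>free_group S\<^esub> inv\<^bsub>free_group S\<^esub> w | a.
         a \<in> j2 S e \<union> j2s S e})"

definition f_quot :: "('a \<times> 'a) set \<Rightarrow> 'a \<Rightarrow> 'a set" where
  "f_quot e x = e `` {x}"

definition f_bar :: "('a \<times> 'a) set \<Rightarrow> 'a word \<Rightarrow> 'a set word" where
  "f_bar e w = reduce (map (\<lambda>(x, b). (f_quot e x, b)) w)"

end

theory Submission
  imports Defs
begin

text \<open>
  The topology of \<open>F\<^sub>N\<^sub>A(X)\<close> is determined through its universal property. Let \<open>\<K>\<close> be a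
  filter base of subgroups of \<open>F(X)\<close>, stable under conjugation up to refinement, each member
  of which contains \<open>x\<inverse>y\<close> and \<open>xy\<inverse>\<close> for all pairs \<open>(x, y)\<close> of some \<open>\<epsilon> \<in> B\<close>. The left
  cosets of the images of \<open>\<K>\<close> form a Hausdorff non-archimedean group topology on
  \<open>F(X)/\<Inter>\<K>\<close> for which \<open>X \<rightarrow> F(X)/\<Inter>\<K>\<close> is uniformly continuous. The universal property
  extends this map to a continuous homomorphism, which must be the quotient map; as the
  preimage of the image of \<open>K \<in> \<K>\<close> is \<open>K\<close>, every \<open>K \<in> \<K>\<close> is open. The subgroups \<open>[V\<^sub>\<psi>]\<close>
  form such a base, since conjugation by \<open>g\<close> replaces \<open>\<psi>\<close> by \<open>\<psi>(g \<cdot> _)\<close>; in the balanced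
  case the single normal subgroup \<open>[\<epsilon>\<tilde>]\<close> does, and the quotient is balanced as well.
  Conversely, uniform continuity of \<open>X \<rightarrow> F(X)\<close> puts the pairs of some \<open>\<epsilon>\<close> into any open
  subgroup \<open>H\<close>; applied to all conjugates of \<open>H\<close> this yields \<open>\<psi>\<close> with \<open>[V\<^sub>\<psi>] \<subseteq> H\<close>, and in
  a balanced group a single \<open>\<epsilon>\<close> serves all conjugates at once. Finally \<open>[\<epsilon>\<tilde>]\<close> is the
  kernel of \<open>f_bar \<epsilon>\<close>, so the fibres of \<open>f_bar \<epsilon>\<close> are the cosets of \<open>[\<epsilon>\<tilde>]\<close> and the topology of
  \<open>F\<^sup>b\<^sub>N\<^sub>A(X)\<close> is the weak topology of these maps.
\<close>

section \<open>Reduced words\<close>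

definition push_letter :: "'a \<times> bool \<Rightarrow> 'a word \<Rightarrow> 'a word" where
  "push_letter a w = (case w of [] \<Rightarrow> [a] | b # v \<Rightarrow> if canceling a b then v else a # w)"

lemma push_letter_Nil [simp]: "push_letter a [] = [a]"
  and push_letter_Cons [simp]: "push_letter a (b # v) = (if canceling a b then v else a # b # v)"
  by (simp_all add: push_letter_def)

lemma reduce_foldr: "reduce w = foldr push_letter w []"
  by (simp add: reduce_def push_letter_def[abs_def])

lemma reduce_Nil [simp]: "reduce [] = []"
  and reduce_Cons [simp]: "reduce (a # w) = push_letter a (reduce w)"
  by (simp_all add: reduce_foldr)

lemma reduce_append: "reduce (u @ v) = foldr push_letter u (reduce v)"
  by (simp add: reduce_foldr)

lemma reduced_Nil [simp]: "reduced []"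
  and reduced_singleton [simp]: "reduced [a]"
  by (simp_all add: reduced_def)

lemma reduced_Cons_Cons [simp]: "reduced (a # b # w) \<longleftrightarrow> \<not> canceling a b \<and> reduced (b # w)"
  unfolding reduced_def by (simp add: All_less_Suc2)

lemma reduced_ConsD: "reduced (a # w) \<Longrightarrow> reduced w"
  by (cases w) auto

lemma canceling_canceling: "canceling a b \<Longrightarrow> canceling b c \<Longrightarrow> a = c"
  by (cases a; cases b; cases c) (auto simp: canceling_def)

lemma reduced_push_letter: "reduced w \<Longrightarrow> reduced (push_letter a w)"
  by (cases w rule: remdups_adj.cases) auto

lemma reduced_reduce: "reduced (reduce w)"
  by (induction w) (simp_all add: reduced_push_letter)

lemma reduce_reduced: "reduced w \<Longrightarrow> reduce w = w"
proof (induction w)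
  case (Cons a w)
  then show ?case by (cases w) (auto dest: reduced_ConsD)
qed simp

lemma reduce_idem [simp]: "reduce (reduce w) = reduce w"
  by (simp add: reduce_reduced reduced_reduce)

lemma push_letter_cancel:
  assumes "canceling a b" and "reduced w"
  shows "push_letter a (push_letter b w) = w"
proof (cases w)
  case (Cons c v)
  show ?thesis
  proof (cases "canceling b c")
    case True
    then have "a = c" using assms(1) canceling_canceling by blast
    with True Cons assms(2) show ?thesis by (cases v) auto
  qed (use Cons assms(1) in auto)
qed (use assms(1) in simp)

lemma reduce_push_letter_append: "reduce (push_letter a w @ v) = push_letter a (reduce (w @ v))"
  by (cases w) (auto simp: push_letter_cancel reduced_reduce)

lemma reduce_append_reduce_left [simp]: "reduce (reduce u @ v) = reduce (u @ v)"
  by (induction u) (simp_all add: reduce_push_letter_append)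

lemma reduce_append_reduce_right [simp]: "reduce (u @ reduce v) = reduce (u @ v)"
  by (simp add: reduce_append)

lemma set_push_letter: "set (push_letter a w) \<subseteq> insert a (set w)"
  by (cases w) auto

lemma set_reduce: "set (reduce w) \<subseteq> set w"
  by (induction w) (use set_push_letter in fastforce)+

definition inverse_word :: "'a word \<Rightarrow> 'a word" where
  "inverse_word w = rev (map (\<lambda>(x, b). (x, \<not> b)) w)"

lemma reduce_inverse_word_append: "reduce (inverse_word w @ w) = []"
proof (induction w)
  case (Cons a w)
  have "reduce (inverse_word (a # w) @ a # w)
      = foldr push_letter (inverse_word w) (push_letter (fst a, \<not> snd a) (push_letter a (reduce w)))"
    by (simp add: inverse_word_def reduce_append case_prod_beta)
  also have "\<dots> = reduce (inverse_word w @ w)"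
    by (simp add: push_letter_cancel reduced_reduce canceling_def reduce_append)
  finally show ?case using Cons.IH by simp
qed (simp add: inverse_word_def)

section \<open>The free group\<close>

lemma free_group_carrier: "w \<in> carrier (free_group S) \<longleftrightarrow> fst ` set w \<subseteq> S \<and> reduced w"
  and free_group_mult: "u \<otimes>\<^bsub>free_group S\<^esub> v = reduce (u @ v)"
  and free_group_one: "\<one>\<^bsub>free_group S\<^esub> = []"
  by (simp_all add: free_group_def)

lemma group_free_group: "group (free_group S)"
proof (rule groupI)
  fix u v assume "u \<in> carrier (free_group S)" "v \<in> carrier (free_group S)"
  then have "fst ` set (u @ v) \<subseteq> S" by (auto simp: free_group_carrier)
  then show "u \<otimes>\<^bsub>free_group S\<^esub> v \<in> carrier (free_group S)"
    using image_mono[OF set_reduce[of "u @ v"], of fst]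
    by (simp add: free_group_carrier free_group_mult reduced_reduce)
next
  fix w assume w: "w \<in> carrier (free_group S)"
  show "\<exists>v\<in>carrier (free_group S). v \<otimes>\<^bsub>free_group S\<^esub> w = \<one>\<^bsub>free_group S\<^esub>"
  proof
    show "reduce (inverse_word w) \<otimes>\<^bsub>free_group S\<^esub> w = \<one>\<^bsub>free_group S\<^esub>"
      by (simp add: free_group_mult free_group_one reduce_inverse_word_append)
    show "reduce (inverse_word w) \<in> carrier (free_group S)"
      using w set_reduce[of "inverse_word w"]
      by (force simp: free_group_carrier reduced_reduce inverse_word_def)
  qed
qed (auto simp: free_group_carrier free_group_mult free_group_one reduce_reduced)

lemma ins_in_carrier: "x \<in> S \<Longrightarrow> ins x \<in> carrier (free_group S)"
  by (simp add: free_group_carrier ins_def)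

lemma inv_ins:
  assumes "x \<in> S"
  shows "inv\<^bsub>free_group S\<^esub> (ins x) = [(x, False)]"
proof (rule group.inv_equality[OF group_free_group])
  show "[(x, False)] \<otimes>\<^bsub>free_group S\<^esub> ins x = \<one>\<^bsub>free_group S\<^esub>"
    by (simp add: free_group_mult free_group_one ins_def canceling_def)
qed (use assms in \<open>simp_all add: free_group_carrier ins_def\<close>)

lemma carrier_free_group_subset_generate:
  "carrier (free_group S) \<subseteq> generate (free_group S) (ins ` S)"
proof
  fix w assume "w \<in> carrier (free_group S)"
  then show "w \<in> generate (free_group S) (ins ` S)"
  proof (induction w)
    case Nil
    then show ?case using generate.one[of "free_group S"] by (simp add: free_group_one)
  next
    case (Cons a w)
    obtain x b where a: "a = (x, b)" by (cases a)
    have x: "x \<in> S" and red: "reduced (a # w)" using Cons.prems a by (auto simp: free_group_carrier)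
    have w: "w \<in> generate (free_group S) (ins ` S)"
      using Cons.IH Cons.prems reduced_ConsD[OF red] by (simp add: free_group_carrier)
    have "[a] \<in> generate (free_group S) (ins ` S)"
    proof (cases b)
      case True
      then have "[a] = ins x" using a by (simp add: ins_def)
      then show ?thesis using generate.incl[OF imageI[OF x]] by simp
    next
      case False
      then have "[a] = inv\<^bsub>free_group S\<^esub> (ins x)" using a inv_ins[OF x] by simp
      then show ?thesis using generate.inv[OF imageI[OF x]] by simp
    qed
    from generate.eng[OF this w] show ?case using reduce_reduced[OF red] by (simp add: free_group_mult)
  qed
qed

lemma hom_free_group_eqI:
  assumes H: "group H" and h: "h \<in> hom (free_group S) H" and h': "h' \<in> hom (free_group S) H"
    and eq: "\<And>x. x \<in> S \<Longrightarrow> h (ins x) = h' (ins x)"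
    and w: "w \<in> carrier (free_group S)"
  shows "h w = h' w"
proof -
  interpret F: group "free_group S" by (rule group_free_group)
  interpret h: group_hom "free_group S" H h
    by (intro group_hom.intro group_hom_axioms.intro F.is_group H h)
  interpret h': group_hom "free_group S" H h'
    by (intro group_hom.intro group_hom_axioms.intro F.is_group H h')
  have gens: "ins ` S \<subseteq> carrier (free_group S)" by (rule image_subsetI) (rule ins_in_carrier)
  have "h v = h' v" if "v \<in> generate (free_group S) (ins ` S)" for v
    using that
  proof (induction rule: generate.induct)
    case one
    then show ?case by simp
  next
    case (incl v)
    then obtain x where "x \<in> S" "v = ins x" by blast
    then show ?case using eq by simp
  next
    case (inv v)
    then obtain x where x: "x \<in> S" "v = ins x" by blast
    then show ?case
      using eq[OF x(1)] h.hom_inv[OF ins_in_carrier] h'.hom_inv[OF ins_in_carrier] by simp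
  next
    case (eng v1 v2)
    then show ?case using F.generate_in_carrier[OF gens] by simp
  qed
  then show ?thesis using subsetD[OF carrier_free_group_subset_generate w] .
qed

definition map_word :: "('a \<Rightarrow> 'b) \<Rightarrow> 'a word \<Rightarrow> 'b word" where
  "map_word g w = reduce (map (apfst g) w)"

lemma f_bar_eq_map_word: "f_bar e = map_word (f_quot e)"
  by (simp add: fun_eq_iff f_bar_def map_word_def apfst_def map_prod_def)

lemma reduce_map_push_letter:
  "reduce (map (apfst g) (push_letter a w)) = push_letter (apfst g a) (reduce (map (apfst g) w))"
  by (cases w) (auto simp: push_letter_cancel reduced_reduce canceling_def apfst_def map_prod_def
      split: prod.splits)

lemma map_word_reduce [simp]: "map_word g (reduce w) = map_word g w"
  by (induction w) (simp_all add: map_word_def reduce_map_push_letter)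

lemma map_word_append: "map_word g (u @ v) = reduce (map_word g u @ map_word g v)"
  by (simp add: map_word_def)

lemma map_word_map_word: "map_word g (map_word h w) = map_word (g \<circ> h) w"
proof -
  have "map_word g (map_word h w) = map_word g (map (apfst h) w)"
    by (simp add: map_word_def[of h])
  then show ?thesis by (simp add: map_word_def comp_def apfst_compose)
qed

lemma set_map_word: "fst ` set (map_word g w) \<subseteq> g ` fst ` set w"
  using set_reduce[of "map (apfst g) w"] by (force simp: map_word_def)

lemma map_word_hom:
  assumes "g \<in> S \<rightarrow> S'"
  shows "map_word g \<in> hom (free_group S) (free_group S')"
proof (rule homI)
  fix w assume "w \<in> carrier (free_group S)"
  then show "map_word g w \<in> carrier (free_group S')"
    using set_map_word[of g w] assms by (fastforce simp: free_group_carrier map_word_def reduced_reduce)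
qed (simp add: free_group_mult map_word_append)

section \<open>Cosets, kernels and conjugates\<close>

lemma (in group) mem_l_coset_iff:
  assumes "subgroup K G" and "a \<in> carrier G" and "b \<in> carrier G"
  shows "b \<in> a <#\<^bsub>G\<^esub> K \<longleftrightarrow> inv a \<otimes> b \<in> K"
proof
  assume "b \<in> a <#\<^bsub>G\<^esub> K"
  then obtain k where k: "k \<in> K" "b = a \<otimes> k" by (auto simp: l_coset_def)
  then have "inv a \<otimes> b = k"
    using assms(2) subgroup.mem_carrier[OF assms(1) k(1)] by (simp add: m_assoc[symmetric])
  then show "inv a \<otimes> b \<in> K" using k(1) by simp
qed (rule subgroup.lcos_module_rev[OF assms(1) is_group assms(2,3)])

lemma (in group_hom) fiber_eq_l_coset_kernel:
  assumes p: "p \<in> carrier G"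
  shows "{w \<in> carrier G. h w = h p} = p <#\<^bsub>G\<^esub> kernel G H h"
proof -
  have "h w = h p \<longleftrightarrow> inv p \<otimes> w \<in> kernel G H h" if w: "w \<in> carrier G" for w
  proof -
    have "h (inv p \<otimes> w) = inv\<^bsub>H\<^esub> h p \<otimes>\<^bsub>H\<^esub> h w" using p w by simp
    moreover have "\<one>\<^bsub>H\<^esub> = inv\<^bsub>H\<^esub> h p \<otimes>\<^bsub>H\<^esub> h w \<longleftrightarrow> h w = h p"
      using H.inv_solve_left[of "\<one>\<^bsub>H\<^esub>" "h p" "h w"] p w by simp
    ultimately show ?thesis using p w by (auto simp: kernel_def)
  qed
  moreover have "w \<in> p <#\<^bsub>G\<^esub> kernel G H h \<longleftrightarrow> inv p \<otimes> w \<in> kernel G H h" if "w \<in> carrier G" for w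
    using G.mem_l_coset_iff[OF subgroup_kernel p that] .
  moreover have "p <#\<^bsub>G\<^esub> kernel G H h \<subseteq> carrier G"
    using G.l_coset_subset_G[OF subgroup.subset[OF subgroup_kernel] p] .
  ultimately show ?thesis by blast
qed

lemma (in normal) group_hom_Mod: "group_hom G (G Mod H) (\<lambda>a. H #> a)"
  by (intro group_hom.intro group_hom_axioms.intro is_group factorgroup_is_group r_coset_hom_Mod)

lemma (in group) subgroup_conj_preimage:
  assumes H: "subgroup H G" and g: "g \<in> carrier G"
  shows "subgroup {k \<in> carrier G. g \<otimes> k \<otimes> inv g \<in> H} G"
proof (rule subgroupI)
  have "\<one> \<in> {k \<in> carrier G. g \<otimes> k \<otimes> inv g \<in> H}" using g subgroup.one_closed[OF H] by simp
  then show "{k \<in> carrier G. g \<otimes> k \<otimes> inv g \<in> H} \<noteq> {}" by blast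
next
  fix a assume "a \<in> {k \<in> carrier G. g \<otimes> k \<otimes> inv g \<in> H}"
  then have a: "a \<in> carrier G" "g \<otimes> a \<otimes> inv g \<in> H" by auto
  have "inv (g \<otimes> a \<otimes> inv g) = g \<otimes> inv a \<otimes> inv g"
    using a g by (simp add: inv_mult_group m_assoc)
  then show "inv a \<in> {k \<in> carrier G. g \<otimes> k \<otimes> inv g \<in> H}"
    using subgroup.m_inv_closed[OF H a(2)] a(1) by simp
next
  fix a b
  assume "a \<in> {k \<in> carrier G. g \<otimes> k \<otimes> inv g \<in> H}" "b \<in> {k \<in> carrier G. g \<otimes> k \<otimes> inv g \<in> H}"
  then have a: "a \<in> carrier G" "g \<otimes> a \<otimes> inv g \<in> H" and b: "b \<in> carrier G" "g \<otimes> b \<otimes> inv g \<in> H"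
    by auto
  have "(g \<otimes> a \<otimes> inv g) \<otimes> (g \<otimes> b \<otimes> inv g) = g \<otimes> (a \<otimes> b) \<otimes> inv g"
    using a b g by (simp add: m_assoc) (simp add: m_assoc[symmetric])
  then show "a \<otimes> b \<in> {k \<in> carrier G. g \<otimes> k \<otimes> inv g \<in> H}"
    using subgroup.m_closed[OF H a(2) b(2)] a(1) b(1) by simp
qed auto

section \<open>Topological groups\<close>

locale topological_group =
  fixes G (structure) and T :: "'g topology"
  assumes topgroup: "topgroup G T"
begin

sublocale group G
  using topgroup by (simp add: topgroup_def)

lemma topspace_eq [simp]: "topspace T = carrier G"
  using topgroup by (simp add: topgroup_def)

lemma continuous_map_mult: "continuous_map (prod_topology T T) T (\<lambda>p. fst p \<otimes> snd p)"
  using topgroup by (simp add: topgroup_def)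

lemma continuous_map_l_mult: "g \<in> carrier G \<Longrightarrow> continuous_map T T (\<lambda>x. g \<otimes> x)"
  using continuous_map_compose[OF _ continuous_map_mult, of T "\<lambda>x. (g, x)"]
  by (simp add: o_def continuous_map_pairedI continuous_map_id[unfolded id_def])

lemma continuous_map_r_mult: "g \<in> carrier G \<Longrightarrow> continuous_map T T (\<lambda>x. x \<otimes> g)"
  using continuous_map_compose[OF _ continuous_map_mult, of T "\<lambda>x. (x, g)"]
  by (simp add: o_def continuous_map_pairedI continuous_map_id[unfolded id_def])

lemma openin_l_mult_preimage:
  assumes "g \<in> carrier G" and "openin T U"
  shows "openin T {x \<in> carrier G. g \<otimes> x \<in> U}"
  using openin_continuous_map_preimage[OF continuous_map_l_mult[OF assms(1)] assms(2)] by simp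

lemma openin_conj_preimage:
  assumes g: "g \<in> carrier G" and U: "openin T U"
  shows "openin T {x \<in> carrier G. g \<otimes> x \<otimes> inv g \<in> U}"
  using openin_continuous_map_preimage[OF continuous_map_compose[OF
        continuous_map_l_mult[OF g] continuous_map_r_mult[OF inv_closed[OF g]]] U]
  by (simp add: o_def)

lemma openin_l_coset:
  assumes g: "g \<in> carrier G" and U: "openin T U"
  shows "openin T (g <#\<^bsub>G\<^esub> U)"
proof -
  have "g <#\<^bsub>G\<^esub> U = {x \<in> carrier G. inv g \<otimes> x \<in> U}"
  proof (intro equalityI subsetI)
    fix x assume "x \<in> g <#\<^bsub>G\<^esub> U"
    then obtain u where "u \<in> U" "x = g \<otimes> u" by (auto simp: l_coset_def)
    then show "x \<in> {x \<in> carrier G. inv g \<otimes> x \<in> U}"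
      using g openin_subset[OF U] by (auto simp: m_assoc[symmetric])
  next
    fix x assume "x \<in> {x \<in> carrier G. inv g \<otimes> x \<in> U}"
    then have "x = g \<otimes> (inv g \<otimes> x)" "inv g \<otimes> x \<in> U" using g by (auto simp: m_assoc[symmetric])
    then show "x \<in> g <#\<^bsub>G\<^esub> U" unfolding l_coset_def by blast
  qed
  then show ?thesis using openin_l_mult_preimage[OF inv_closed[OF g] U] by simp
qed

lemma nbhd1_subgroupI:
  assumes "subgroup H G" and "openin T H"
  shows "nbhd1 G T H"
  unfolding nbhd1_def topspace_eq
  using assms subgroup.subset[OF assms(1)] subgroup.one_closed[OF assms(1)] by blast

lemma openin_iff_l_cosets:
  assumes nbhd: "\<And>M. M \<in> \<M> \<Longrightarrow> nbhd1 G T M"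
    and base: "\<And>V. nbhd1 G T V \<Longrightarrow> \<exists>M\<in>\<M>. M \<subseteq> V"
  shows "openin T A \<longleftrightarrow> A \<subseteq> carrier G \<and> (\<forall>p\<in>A. \<exists>M\<in>\<M>. p <#\<^bsub>G\<^esub> M \<subseteq> A)"
proof
  assume A: "openin T A"
  have "\<exists>M\<in>\<M>. p <#\<^bsub>G\<^esub> M \<subseteq> A" if p: "p \<in> A" for p
  proof -
    let ?V = "{x \<in> carrier G. p \<otimes> x \<in> A}"
    have pc: "p \<in> carrier G" using openin_subset[OF A] p by auto
    have "openin T ?V" by (rule openin_l_mult_preimage[OF pc A])
    moreover have "\<one> \<in> ?V" using p pc by simp
    ultimately have "nbhd1 G T ?V" unfolding nbhd1_def topspace_eq by blast
    then obtain M where "M \<in> \<M>" "M \<subseteq> ?V" using base by blast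
    then show ?thesis unfolding l_coset_def by blast
  qed
  then show "A \<subseteq> carrier G \<and> (\<forall>p\<in>A. \<exists>M\<in>\<M>. p <#\<^bsub>G\<^esub> M \<subseteq> A)"
    using openin_subset[OF A] by simp
next
  assume A: "A \<subseteq> carrier G \<and> (\<forall>p\<in>A. \<exists>M\<in>\<M>. p <#\<^bsub>G\<^esub> M \<subseteq> A)"
  have "\<exists>W. openin T W \<and> p \<in> W \<and> W \<subseteq> A" if p: "p \<in> A" for p
  proof -
    obtain M where M: "M \<in> \<M>" "p <#\<^bsub>G\<^esub> M \<subseteq> A" using A p by blast
    from nbhd[OF M(1)] obtain W where W: "openin T W" "\<one> \<in> W" "W \<subseteq> M"
      unfolding nbhd1_def by blast
    have pc: "p \<in> carrier G" using A p by blast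
    have "p \<in> p <#\<^bsub>G\<^esub> W"
      unfolding l_coset_def using W(2) pc by (intro UN_I[of \<one>]) simp_all
    moreover have "p <#\<^bsub>G\<^esub> W \<subseteq> A" using W(3) M(2) unfolding l_coset_def by blast
    ultimately show ?thesis using openin_l_coset[OF pc W(1)] by blast
  qed
  then show "openin T A" by (subst openin_subopen) blast
qed

lemma conj_nbhd1_if_balanced:
  assumes bal: "balanced_group G T" and H: "nbhd1 G T H"
  shows "\<exists>V. nbhd1 G T V \<and> (\<forall>w\<in>carrier G. \<forall>v\<in>V. w \<otimes> v \<otimes> inv w \<in> H)"
proof -
  let ?E = "{(g, h). g \<in> carrier G \<and> h \<in> carrier G \<and> inv g \<otimes> h \<in> H}"
  have "?E \<in> left_unif G T"
    unfolding left_unif_def by (intro CollectI conjI exI[of _ H] H) auto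
  then have "?E \<in> right_unif G T" using bal unfolding balanced_group_def by simp
  then obtain V where V: "nbhd1 G T V"
    "{(g, h). g \<in> carrier G \<and> h \<in> carrier G \<and> h \<otimes> inv g \<in> V} \<subseteq> ?E"
    unfolding right_unif_def by blast
  have "w \<otimes> v \<otimes> inv w \<in> H" if w: "w \<in> carrier G" and v: "v \<in> V" for w v
  proof -
    have vc: "v \<in> carrier G" using v V(1) unfolding nbhd1_def by auto
    have "(v \<otimes> inv w) \<otimes> inv (inv w) = v" using w vc by (simp add: m_assoc)
    then have "(inv w, v \<otimes> inv w) \<in> {(g, h). g \<in> carrier G \<and> h \<in> carrier G \<and> h \<otimes> inv g \<in> V}"
      using v w vc by simp
    then have "(inv w, v \<otimes> inv w) \<in> ?E" by (rule subsetD[OF V(2)])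
    then show ?thesis using w vc by (simp add: m_assoc)
  qed
  then show ?thesis using V(1) by blast
qed

end

lemma topological_group_if_nonarch: "nonarch_group G T \<Longrightarrow> topological_group G T"
  by (simp add: topological_group_def nonarch_group_def)

section \<open>Group topologies defined by bases of subgroups\<close>

definition subgroup_open :: "('g, 'm) monoid_scheme \<Rightarrow> 'g set set \<Rightarrow> 'g set \<Rightarrow> bool" where
  "subgroup_open G \<K> W \<longleftrightarrow> W \<subseteq> carrier G \<and> (\<forall>p\<in>W. \<exists>K\<in>\<K>. p <#\<^bsub>G\<^esub> K \<subseteq> W)"

definition subgroup_topology :: "('g, 'm) monoid_scheme \<Rightarrow> 'g set set \<Rightarrow> 'g topology" where
  "subgroup_topology G \<K> = topology (subgroup_open G \<K>)"

locale subgroup_base = group G for G (structure) +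
  fixes \<K>
  assumes subgroup_base_mem: "K \<in> \<K> \<Longrightarrow> subgroup K G"
    and nonempty_base: "\<K> \<noteq> {}"
    and directed_base: "K1 \<in> \<K> \<Longrightarrow> K2 \<in> \<K> \<Longrightarrow> \<exists>K3\<in>\<K>. K3 \<subseteq> K1 \<inter> K2"
    and conj_base: "K \<in> \<K> \<Longrightarrow> g \<in> carrier G \<Longrightarrow> \<exists>K'\<in>\<K>. \<forall>k\<in>K'. g \<otimes> k \<otimes> inv g \<in> K"
begin

abbreviation (input) "\<T> \<equiv> subgroup_topology G \<K>"

lemma base_subset_carrier: "K \<in> \<K> \<Longrightarrow> K \<subseteq> carrier G"
  using subgroup_base_mem subgroup.subset by blast

lemma l_coset_self: "K \<in> \<K> \<Longrightarrow> a \<in> carrier G \<Longrightarrow> a \<in> a <#\<^bsub>G\<^esub> K"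
  using mem_l_coset_iff[OF subgroup_base_mem] subgroup.one_closed[OF subgroup_base_mem] by simp

lemma openin_subgroup_topology: "openin \<T> W \<longleftrightarrow> subgroup_open G \<K> W"
proof -
  have "istopology (subgroup_open G \<K>)"
    unfolding istopology_def
  proof (intro conjI allI impI)
    fix S T assume ST: "subgroup_open G \<K> S" "subgroup_open G \<K> T"
    show "subgroup_open G \<K> (S \<inter> T)"
      unfolding subgroup_open_def
    proof (intro conjI ballI)
      show "S \<inter> T \<subseteq> carrier G" using ST unfolding subgroup_open_def by blast
      fix p assume p: "p \<in> S \<inter> T"
      obtain K1 where K1: "K1 \<in> \<K>" "p <#\<^bsub>G\<^esub> K1 \<subseteq> S"
        using ST(1) p unfolding subgroup_open_def by blast
      obtain K2 where K2: "K2 \<in> \<K>" "p <#\<^bsub>G\<^esub> K2 \<subseteq> T"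
        using ST(2) p unfolding subgroup_open_def by blast
      obtain K3 where K3: "K3 \<in> \<K>" "K3 \<subseteq> K1 \<inter> K2"
        using directed_base[OF K1(1) K2(1)] by blast
      have "p <#\<^bsub>G\<^esub> K3 \<subseteq> p <#\<^bsub>G\<^esub> K1" "p <#\<^bsub>G\<^esub> K3 \<subseteq> p <#\<^bsub>G\<^esub> K2"
        using K3(2) unfolding l_coset_def by auto
      then show "\<exists>K\<in>\<K>. p <#\<^bsub>G\<^esub> K \<subseteq> S \<inter> T" using K1(2) K2(2) K3(1) by blast
    qed
  next
    fix \<F> assume F: "\<forall>S\<in>\<F>. subgroup_open G \<K> S"
    show "subgroup_open G \<K> (\<Union>\<F>)"
      unfolding subgroup_open_def
    proof (intro conjI ballI)
      show "\<Union>\<F> \<subseteq> carrier G" using F unfolding subgroup_open_def by blast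
      fix p assume "p \<in> \<Union>\<F>"
      then obtain S where S: "S \<in> \<F>" "p \<in> S" by blast
      then obtain K where "K \<in> \<K>" "p <#\<^bsub>G\<^esub> K \<subseteq> S" using F unfolding subgroup_open_def by blast
      then show "\<exists>K\<in>\<K>. p <#\<^bsub>G\<^esub> K \<subseteq> \<Union>\<F>" using S(1) by blast
    qed
  qed
  then show ?thesis by (simp add: subgroup_topology_def topology_inverse')
qed

lemma openin_l_coset_base:
  assumes K: "K \<in> \<K>" and a: "a \<in> carrier G"
  shows "openin \<T> (a <#\<^bsub>G\<^esub> K)"
  unfolding openin_subgroup_topology subgroup_open_def
proof (intro conjI ballI)
  show "a <#\<^bsub>G\<^esub> K \<subseteq> carrier G" using l_coset_subset_G[OF base_subset_carrier[OF K] a] .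
  fix p assume "p \<in> a <#\<^bsub>G\<^esub> K"
  then have "a <#\<^bsub>G\<^esub> K = p <#\<^bsub>G\<^esub> K" using l_repr_independence a subgroup_base_mem[OF K] by blast
  then show "\<exists>K'\<in>\<K>. p <#\<^bsub>G\<^esub> K' \<subseteq> a <#\<^bsub>G\<^esub> K" using K by auto
qed

lemma openin_base: "K \<in> \<K> \<Longrightarrow> openin \<T> K"
  using openin_l_coset_base[OF _ one_closed] lcos_mult_one[OF base_subset_carrier] by simp

lemma topspace_subgroup_topology [simp]: "topspace \<T> = carrier G"
proof
  show "topspace \<T> \<subseteq> carrier G"
    using openin_topspace[of \<T>] unfolding openin_subgroup_topology subgroup_open_def by blast
  obtain K where "K \<in> \<K>" using nonempty_base by blast
  then have "openin \<T> (carrier G)"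
    unfolding openin_subgroup_topology subgroup_open_def
    using l_coset_subset_G[OF base_subset_carrier] by blast
  then show "carrier G \<subseteq> topspace \<T>" by (rule openin_subset)
qed

lemma continuous_map_mult_subgroup_topology:
  "continuous_map (prod_topology \<T> \<T>) \<T> (\<lambda>p. fst p \<otimes> snd p)"
  unfolding continuous_map openin_prod_topology_alt
proof (intro conjI allI impI)
  fix U assume U: "openin \<T> U"
  fix a b assume "(a, b) \<in> {x \<in> topspace (prod_topology \<T> \<T>). fst x \<otimes> snd x \<in> U}"
  then have a: "a \<in> carrier G" and b: "b \<in> carrier G" and ab: "a \<otimes> b \<in> U" by auto
  obtain K where K: "K \<in> \<K>" "(a \<otimes> b) <#\<^bsub>G\<^esub> K \<subseteq> U"
    using U ab unfolding openin_subgroup_topology subgroup_open_def by blast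
  obtain K' where K': "K' \<in> \<K>" "\<forall>k\<in>K'. inv b \<otimes> k \<otimes> inv (inv b) \<in> K"
    using conj_base[OF K(1) inv_closed[OF b]] by blast
  have "x \<otimes> y \<in> U" if x: "x \<in> a <#\<^bsub>G\<^esub> K'" and y: "y \<in> b <#\<^bsub>G\<^esub> K" for x y
  proof -
    obtain k' k where k: "k' \<in> K'" "x = a \<otimes> k'" "k \<in> K" "y = b \<otimes> k"
      using x y by (auto simp: l_coset_def)
    have kc: "k' \<in> carrier G" "k \<in> carrier G"
      using k base_subset_carrier K K' by auto
    have "x \<otimes> y = (a \<otimes> b) \<otimes> ((inv b \<otimes> k' \<otimes> b) \<otimes> k)"
      using a b kc k by (simp add: m_assoc) (simp add: m_assoc[symmetric])
    moreover have "(inv b \<otimes> k' \<otimes> b) \<otimes> k \<in> K"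
      using K'(2) k b subgroup.m_closed[OF subgroup_base_mem[OF K(1)]] by simp
    ultimately show ?thesis using K(2) unfolding l_coset_def by blast
  qed
  then have "(a <#\<^bsub>G\<^esub> K') \<times> (b <#\<^bsub>G\<^esub> K) \<subseteq> {x \<in> topspace (prod_topology \<T> \<T>). fst x \<otimes> snd x \<in> U}"
    using l_coset_subset_G[OF base_subset_carrier[OF K'(1)] a]
      l_coset_subset_G[OF base_subset_carrier[OF K(1)] b] by auto
  then show "\<exists>V W. openin \<T> V \<and> openin \<T> W \<and> a \<in> V \<and> b \<in> W \<and>
      V \<times> W \<subseteq> {x \<in> topspace (prod_topology \<T> \<T>). fst x \<otimes> snd x \<in> U}"
    using openin_l_coset_base[OF K'(1) a] openin_l_coset_base[OF K(1) b]
      l_coset_self[OF K'(1) a] l_coset_self[OF K(1) b] by blast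
qed auto

lemma continuous_map_inv_subgroup_topology: "continuous_map \<T> \<T> (\<lambda>x. inv x)"
  unfolding continuous_map
proof (intro conjI allI impI)
  fix U assume U: "openin \<T> U"
  show "openin \<T> {x \<in> topspace \<T>. inv x \<in> U}"
    unfolding openin_subgroup_topology subgroup_open_def
  proof (intro conjI ballI)
    fix a assume "a \<in> {x \<in> topspace \<T>. inv x \<in> U}"
    then have a: "a \<in> carrier G" "inv a \<in> U" by auto
    obtain K where K: "K \<in> \<K>" "inv a <#\<^bsub>G\<^esub> K \<subseteq> U"
      using U a unfolding openin_subgroup_topology subgroup_open_def by blast
    obtain K' where K': "K' \<in> \<K>" "\<forall>k\<in>K'. a \<otimes> k \<otimes> inv a \<in> K"
      using conj_base[OF K(1) a(1)] by blast
    have "inv x \<in> U" if x: "x \<in> a <#\<^bsub>G\<^esub> K'" for x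
    proof -
      obtain k where k: "k \<in> K'" "x = a \<otimes> k" using x by (auto simp: l_coset_def)
      have kc: "k \<in> carrier G" using k(1) base_subset_carrier[OF K'(1)] by auto
      have "inv x = inv a \<otimes> inv (a \<otimes> k \<otimes> inv a)"
        using a(1) kc k(2) by (simp add: inv_mult_group m_assoc) (simp add: m_assoc[symmetric])
      moreover have "inv (a \<otimes> k \<otimes> inv a) \<in> K"
        using K'(2) k(1) subgroup.m_inv_closed[OF subgroup_base_mem[OF K(1)]] by blast
      ultimately show ?thesis using K(2) unfolding l_coset_def by blast
    qed
    then show "\<exists>K\<in>\<K>. a <#\<^bsub>G\<^esub> K \<subseteq> {x \<in> topspace \<T>. inv x \<in> U}"
      using K'(1) l_coset_subset_G[OF base_subset_carrier[OF K'(1)] a(1)] by auto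
  qed auto
qed auto

lemma topgroup_subgroup_topology: "topgroup G \<T>"
  unfolding topgroup_def using is_group continuous_map_mult_subgroup_topology
    continuous_map_inv_subgroup_topology by simp

lemma nbhd1_subgroup_topology_iff: "nbhd1 G \<T> V \<longleftrightarrow> V \<subseteq> carrier G \<and> (\<exists>K\<in>\<K>. K \<subseteq> V)"
proof
  assume "nbhd1 G \<T> V"
  then obtain W where W: "V \<subseteq> carrier G" "openin \<T> W" "\<one> \<in> W" "W \<subseteq> V"
    unfolding nbhd1_def by auto
  then obtain K where "K \<in> \<K>" "\<one> <#\<^bsub>G\<^esub> K \<subseteq> W"
    unfolding openin_subgroup_topology subgroup_open_def by blast
  then show "V \<subseteq> carrier G \<and> (\<exists>K\<in>\<K>. K \<subseteq> V)"
    using W lcos_mult_one[OF base_subset_carrier] by auto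
next
  assume "V \<subseteq> carrier G \<and> (\<exists>K\<in>\<K>. K \<subseteq> V)"
  then show "nbhd1 G \<T> V"
    unfolding nbhd1_def topspace_subgroup_topology
    using openin_base subgroup.one_closed[OF subgroup_base_mem] by blast
qed

lemma nonarch_group_subgroup_topology: "nonarch_group G \<T>"
  unfolding nonarch_group_def nbhd1_subgroup_topology_iff
  using topgroup_subgroup_topology subgroup_base_mem openin_base by blast

lemma Hausdorff_subgroup_topology:
  assumes "\<Inter>\<K> \<subseteq> {\<one>}"
  shows "Hausdorff_space \<T>"
  unfolding Hausdorff_space_def topspace_subgroup_topology
proof (intro allI impI)
  fix a b assume ab: "a \<in> carrier G \<and> b \<in> carrier G \<and> a \<noteq> b"
  have "inv a \<otimes> b \<noteq> \<one>"
  proof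
    assume "inv a \<otimes> b = \<one>"
    then have "a \<otimes> (inv a \<otimes> b) = a" using ab by simp
    then show False using ab by (simp add: m_assoc[symmetric])
  qed
  then obtain K where K: "K \<in> \<K>" "inv a \<otimes> b \<notin> K" using assms by blast
  have "disjnt (a <#\<^bsub>G\<^esub> K) (b <#\<^bsub>G\<^esub> K)"
    unfolding disjnt_def
  proof (rule equals0I)
    fix q assume "q \<in> (a <#\<^bsub>G\<^esub> K) \<inter> (b <#\<^bsub>G\<^esub> K)"
    then have "a <#\<^bsub>G\<^esub> K = q <#\<^bsub>G\<^esub> K" "b <#\<^bsub>G\<^esub> K = q <#\<^bsub>G\<^esub> K"
      using l_repr_independence ab subgroup_base_mem[OF K(1)] by blast+
    then have "b \<in> a <#\<^bsub>G\<^esub> K" using l_coset_self[OF K(1), of b] ab by simp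
    then show False using K ab mem_l_coset_iff[OF subgroup_base_mem[OF K(1)]] by blast
  qed
  then show "\<exists>U V. openin \<T> U \<and> openin \<T> V \<and> a \<in> U \<and> b \<in> V \<and> disjnt U V"
    using openin_l_coset_base[OF K(1)] l_coset_self[OF K(1)] ab by blast
qed

lemma balanced_subgroup_topology:
  assumes normal: "\<And>K. K \<in> \<K> \<Longrightarrow> K \<lhd> G"
  shows "balanced_group G \<T>"
proof -
  have swap: "{(g, h). g \<in> carrier G \<and> h \<in> carrier G \<and> inv g \<otimes> h \<in> K}
      = {(g, h). g \<in> carrier G \<and> h \<in> carrier G \<and> h \<otimes> inv g \<in> K}" if K: "K \<in> \<K>" for K
  proof -
    have "inv g \<otimes> h \<in> K \<longleftrightarrow> h \<otimes> inv g \<in> K" if "g \<in> carrier G" "h \<in> carrier G" for g h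
    proof -
      have "h \<otimes> inv g = g \<otimes> (inv g \<otimes> h) \<otimes> inv g" "inv g \<otimes> h = inv g \<otimes> (h \<otimes> inv g) \<otimes> g"
        using that by (simp add: m_assoc[symmetric], simp add: m_assoc)
      then show ?thesis
        using normal.inv_op_closed2[OF normal[OF K]] normal.inv_op_closed1[OF normal[OF K]] that
        by (metis inv_closed m_closed)
    qed
    then show ?thesis by blast
  qed
  have nbhd: "nbhd1 G \<T> K" if "K \<in> \<K>" for K
    using that base_subset_carrier unfolding nbhd1_subgroup_topology_iff by blast
  have "E \<in> right_unif G \<T>" if "E \<in> left_unif G \<T>" for E
  proof -
    from that obtain V K where "E \<subseteq> carrier G \<times> carrier G" "K \<in> \<K>" "K \<subseteq> V"
        "{(g, h). g \<in> carrier G \<and> h \<in> carrier G \<and> inv g \<otimes> h \<in> V} \<subseteq> E"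
      unfolding left_unif_def nbhd1_subgroup_topology_iff by blast
    then show ?thesis unfolding right_unif_def using swap nbhd by blast
  qed
  moreover have "E \<in> left_unif G \<T>" if "E \<in> right_unif G \<T>" for E
  proof -
    from that obtain V K where "E \<subseteq> carrier G \<times> carrier G" "K \<in> \<K>" "K \<subseteq> V"
        "{(g, h). g \<in> carrier G \<and> h \<in> carrier G \<and> h \<otimes> inv g \<in> V} \<subseteq> E"
      unfolding right_unif_def nbhd1_subgroup_topology_iff by blast
    then show ?thesis unfolding left_unif_def using swap nbhd by blast
  qed
  ultimately show ?thesis unfolding balanced_group_def by blast
qed

end

definition quotient_base :: "('g, 'm) monoid_scheme \<Rightarrow> 'g set set \<Rightarrow> 'g set set set" where
  "quotient_base G \<K> = (\<lambda>K. (\<lambda>a. \<Inter>\<K> #>\<^bsub>G\<^esub> a) ` K) ` \<K>"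

context subgroup_base
begin

lemma normal_Inter_base: "\<Inter>\<K> \<lhd> G"
proof (rule normal_invI)
  show "subgroup (\<Inter>\<K>) G" using subgroups_Inter[OF subgroup_base_mem nonempty_base] .
  fix g h assume g: "g \<in> carrier G" and h: "h \<in> \<Inter>\<K>"
  have "g \<otimes> h \<otimes> inv g \<in> K" if "K \<in> \<K>" for K
    using conj_base[OF that g] h by blast
  then show "g \<otimes> h \<otimes> inv g \<in> \<Inter>\<K>" by blast
qed

interpretation N: normal "\<Inter>\<K>" G by (rule normal_Inter_base)

interpretation \<pi>: group_hom G "G Mod \<Inter>\<K>" "\<lambda>a. \<Inter>\<K> #> a"
  by (rule N.group_hom_Mod)

lemma quotient_map_surj: "(\<lambda>a. \<Inter>\<K> #> a) ` carrier G = carrier (G Mod \<Inter>\<K>)"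
  by (auto simp: carrier_FactGroup RCOSETS_def)

lemma mem_base_if_coset_eq:
  assumes K: "K \<in> \<K>" and w: "w \<in> carrier G" and k: "k \<in> K" and eq: "\<Inter>\<K> #> w = \<Inter>\<K> #> k"
  shows "w \<in> K"
proof -
  have kc: "k \<in> carrier G" using k base_subset_carrier[OF K] by blast
  have "w \<in> \<Inter>\<K> #> k" using rcos_self[OF w N.subgroup_axioms] eq by simp
  then have "w \<otimes> inv k \<in> \<Inter>\<K>" by (rule N.rcos_module_imp[OF is_group kc])
  then have "w \<otimes> inv k \<in> K" using K by blast
  then have "(w \<otimes> inv k) \<otimes> k \<in> K" using k subgroup.m_closed[OF subgroup_base_mem[OF K]] by blast
  then show ?thesis using w kc by (simp add: m_assoc)
qed

lemma subgroup_base_quotient: "subgroup_base (G Mod \<Inter>\<K>) (quotient_base G \<K>)"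
proof (intro subgroup_base.intro subgroup_base_axioms.intro N.factorgroup_is_group)
  fix K' assume "K' \<in> quotient_base G \<K>"
  then obtain L where "L \<in> \<K>" "K' = (\<lambda>a. \<Inter>\<K> #> a) ` L" unfolding quotient_base_def by blast
  then show "subgroup K' (G Mod \<Inter>\<K>)"
    using \<pi>.subgroup_img_is_subgroup[OF subgroup_base_mem] by simp
next
  show "quotient_base G \<K> \<noteq> {}" using nonempty_base by (simp add: quotient_base_def)
next
  fix K1 K2 assume "K1 \<in> quotient_base G \<K>" "K2 \<in> quotient_base G \<K>"
  then obtain L1 L2 where L: "L1 \<in> \<K>" "L2 \<in> \<K>"
      "K1 = (\<lambda>a. \<Inter>\<K> #> a) ` L1" "K2 = (\<lambda>a. \<Inter>\<K> #> a) ` L2"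
    unfolding quotient_base_def by blast
  obtain L3 where L3: "L3 \<in> \<K>" "L3 \<subseteq> L1 \<inter> L2" using directed_base[OF L(1,2)] by blast
  have "(\<lambda>a. \<Inter>\<K> #> a) ` L3 \<in> quotient_base G \<K>"
    using L3(1) unfolding quotient_base_def by (rule imageI)
  moreover have "(\<lambda>a. \<Inter>\<K> #> a) ` L3 \<subseteq> K1 \<inter> K2" using L(3,4) L3(2) by blast
  ultimately show "\<exists>K3\<in>quotient_base G \<K>. K3 \<subseteq> K1 \<inter> K2" by blast
next
  fix K' C assume K': "K' \<in> quotient_base G \<K>" and C: "C \<in> carrier (G Mod \<Inter>\<K>)"
  obtain L where L: "L \<in> \<K>" "K' = (\<lambda>a. \<Inter>\<K> #> a) ` L"
    using K' unfolding quotient_base_def by blast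
  obtain g where g: "g \<in> carrier G" "C = \<Inter>\<K> #> g" using C quotient_map_surj[symmetric] by blast
  obtain L' where L': "L' \<in> \<K>" "\<forall>k\<in>L'. g \<otimes> k \<otimes> inv g \<in> L" using conj_base[OF L(1) g(1)] by blast
  have "C \<otimes>\<^bsub>G Mod \<Inter>\<K>\<^esub> k' \<otimes>\<^bsub>G Mod \<Inter>\<K>\<^esub> inv\<^bsub>G Mod \<Inter>\<K>\<^esub> C \<in> K'"
    if k': "k' \<in> (\<lambda>a. \<Inter>\<K> #> a) ` L'" for k'
  proof -
    obtain k where k: "k \<in> L'" "k' = \<Inter>\<K> #> k" using k' by blast
    have "k \<in> carrier G" using k(1) base_subset_carrier[OF L'(1)] by blast
    then have "\<Inter>\<K> #> (g \<otimes> k \<otimes> inv g) = C \<otimes>\<^bsub>G Mod \<Inter>\<K>\<^esub> k' \<otimes>\<^bsub>G Mod \<Inter>\<K>\<^esub> inv\<^bsub>G Mod \<Inter>\<K>\<^esub> C"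
      using g k(2) by (simp add: \<pi>.hom_mult \<pi>.hom_inv)
    moreover have "g \<otimes> k \<otimes> inv g \<in> L" using L'(2) k(1) by blast
    ultimately show ?thesis using L(2) by (metis imageI)
  qed
  moreover have "(\<lambda>a. \<Inter>\<K> #> a) ` L' \<in> quotient_base G \<K>"
    using L'(1) unfolding quotient_base_def by (rule imageI)
  ultimately show "\<exists>K''\<in>quotient_base G \<K>.
      \<forall>k\<in>K''. C \<otimes>\<^bsub>G Mod \<Inter>\<K>\<^esub> k \<otimes>\<^bsub>G Mod \<Inter>\<K>\<^esub> inv\<^bsub>G Mod \<Inter>\<K>\<^esub> C \<in> K'"
    by blast
qed

lemma Inter_quotient_base: "\<Inter>(quotient_base G \<K>) \<subseteq> {\<one>\<^bsub>G Mod \<Inter>\<K>\<^esub>}"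
proof
  fix C assume C: "C \<in> \<Inter>(quotient_base G \<K>)"
  have C_img: "C \<in> (\<lambda>a. \<Inter>\<K> #> a) ` K" if "K \<in> \<K>" for K
    using InterD[OF C] that unfolding quotient_base_def by simp
  obtain K0 where "K0 \<in> \<K>" using nonempty_base by blast
  then obtain c where c: "c \<in> carrier G" "C = \<Inter>\<K> #> c"
    using C_img base_subset_carrier by blast
  have "c \<in> K" if K: "K \<in> \<K>" for K
  proof -
    obtain k where "k \<in> K" "C = \<Inter>\<K> #> k" using C_img[OF K] by blast
    then show ?thesis using mem_base_if_coset_eq[OF K c(1)] c(2) by simp
  qed
  then have "C = \<Inter>\<K>" using c N.rcos_const[OF is_group] by blast
  then show "C \<in> {\<one>\<^bsub>G Mod \<Inter>\<K>\<^esub>}" by simp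
qed

lemma normal_quotient_base:
  assumes normal: "\<And>K. K \<in> \<K> \<Longrightarrow> K \<lhd> G" and K': "K' \<in> quotient_base G \<K>"
  shows "K' \<lhd> G Mod \<Inter>\<K>"
proof -
  obtain L where "L \<in> \<K>" "K' = (\<lambda>a. \<Inter>\<K> #> a) ` L" using K' unfolding quotient_base_def by blast
  then show ?thesis
    using normal.surj_hom_normal_subgroup[OF normal \<pi>.group_hom_axioms quotient_map_surj] by simp
qed

lemma unif_continuous_quotient_map:
  assumes \<iota>: "\<iota> \<in> A \<rightarrow> carrier G" and U: "\<And>D. D \<in> U \<Longrightarrow> D \<subseteq> A \<times> A"
    and small: "\<And>K. K \<in> \<K> \<Longrightarrow> \<exists>D\<in>U. \<forall>(x, y)\<in>D. inv \<iota> x \<otimes> \<iota> y \<in> K \<and> \<iota> y \<otimes> inv \<iota> x \<in> K"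
  shows "unif_continuous A U
    (two_sided_unif (G Mod \<Inter>\<K>) (subgroup_topology (G Mod \<Inter>\<K>) (quotient_base G \<K>)))
    (\<lambda>x. \<Inter>\<K> #> \<iota> x)"
  unfolding unif_continuous_def
proof
  interpret Q: subgroup_base "G Mod \<Inter>\<K>" "quotient_base G \<K>" by (rule subgroup_base_quotient)
  fix E
  assume "E \<in> two_sided_unif (G Mod \<Inter>\<K>) (subgroup_topology (G Mod \<Inter>\<K>) (quotient_base G \<K>))"
  then obtain V where V: "nbhd1 (G Mod \<Inter>\<K>) (subgroup_topology (G Mod \<Inter>\<K>) (quotient_base G \<K>)) V"
    "{(g, h). g \<in> carrier (G Mod \<Inter>\<K>) \<and> h \<in> carrier (G Mod \<Inter>\<K>)
       \<and> inv\<^bsub>G Mod \<Inter>\<K>\<^esub> g \<otimes>\<^bsub>G Mod \<Inter>\<K>\<^esub> h \<in> V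
       \<and> h \<otimes>\<^bsub>G Mod \<Inter>\<K>\<^esub> inv\<^bsub>G Mod \<Inter>\<K>\<^esub> g \<in> V} \<subseteq> E"
    unfolding two_sided_unif_def by blast
  obtain K' where "K' \<in> quotient_base G \<K>" "K' \<subseteq> V"
    using V(1) unfolding Q.nbhd1_subgroup_topology_iff by blast
  then obtain L where L: "L \<in> \<K>" "(\<lambda>a. \<Inter>\<K> #> a) ` L \<subseteq> V"
    unfolding quotient_base_def by blast
  obtain D where D: "D \<in> U" "\<forall>(x, y)\<in>D. inv \<iota> x \<otimes> \<iota> y \<in> L \<and> \<iota> y \<otimes> inv \<iota> x \<in> L"
    using small[OF L(1)] by blast
  have "(\<Inter>\<K> #> \<iota> x, \<Inter>\<K> #> \<iota> y) \<in> E" if xy: "(x, y) \<in> D" for x y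
  proof -
    have \<iota>xy: "\<iota> x \<in> carrier G" "\<iota> y \<in> carrier G" using U[OF D(1)] xy \<iota> by auto
    have "\<Inter>\<K> #> (inv \<iota> x \<otimes> \<iota> y) \<in> V" "\<Inter>\<K> #> (\<iota> y \<otimes> inv \<iota> x) \<in> V"
      using D(2) xy L(2) by blast+
    moreover have
      "\<Inter>\<K> #> (inv \<iota> x \<otimes> \<iota> y)
         = inv\<^bsub>G Mod \<Inter>\<K>\<^esub> (\<Inter>\<K> #> \<iota> x) \<otimes>\<^bsub>G Mod \<Inter>\<K>\<^esub> (\<Inter>\<K> #> \<iota> y)"
      "\<Inter>\<K> #> (\<iota> y \<otimes> inv \<iota> x)
         = (\<Inter>\<K> #> \<iota> y) \<otimes>\<^bsub>G Mod \<Inter>\<K>\<^esub> inv\<^bsub>G Mod \<Inter>\<K>\<^esub> (\<Inter>\<K> #> \<iota> x)"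
      using \<iota>xy by (simp_all only: \<pi>.hom_mult \<pi>.hom_inv inv_closed)
    moreover have "\<Inter>\<K> #> \<iota> x \<in> carrier (G Mod \<Inter>\<K>)" "\<Inter>\<K> #> \<iota> y \<in> carrier (G Mod \<Inter>\<K>)"
      using \<iota>xy by (simp_all only: \<pi>.hom_closed)
    ultimately show ?thesis using V(2) by (smt (verit) case_prodI mem_Collect_eq subsetD)
  qed
  then show "\<exists>D\<in>U. \<forall>(x, y)\<in>D. (\<Inter>\<K> #> \<iota> x, \<Inter>\<K> #> \<iota> y) \<in> E"
    using D(1) by blast
qed

lemma nbhd1_if_quotient_map_continuous:
  assumes T: "topspace T = carrier G"
    and cont: "continuous_map T (subgroup_topology (G Mod \<Inter>\<K>) (quotient_base G \<K>)) (\<lambda>a. \<Inter>\<K> #> a)"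
    and K: "K \<in> \<K>"
  shows "nbhd1 G T K"
proof -
  interpret Q: subgroup_base "G Mod \<Inter>\<K>" "quotient_base G \<K>" by (rule subgroup_base_quotient)
  let ?W = "{w \<in> topspace T. \<Inter>\<K> #> w \<in> (\<lambda>a. \<Inter>\<K> #> a) ` K}"
  have "(\<lambda>a. \<Inter>\<K> #> a) ` K \<in> quotient_base G \<K>"
    using K unfolding quotient_base_def by (rule imageI)
  then have "openin T ?W" by (rule openin_continuous_map_preimage[OF cont Q.openin_base])
  moreover have "\<one> \<in> ?W"
    using T imageI[OF subgroup.one_closed[OF subgroup_base_mem[OF K]], of "\<lambda>a. \<Inter>\<K> #> a"] by simp
  moreover have "?W \<subseteq> K"
  proof
    fix w assume "w \<in> ?W"
    then obtain k where "w \<in> carrier G" "k \<in> K" "\<Inter>\<K> #> w = \<Inter>\<K> #> k" using T by auto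
    then show "w \<in> K" by (rule mem_base_if_coset_eq[OF K])
  qed
  moreover have "K \<subseteq> topspace T" using base_subset_carrier[OF K] T by simp
  ultimately show ?thesis unfolding nbhd1_def by blast
qed

end

section \<open>Free non-archimedean groups\<close>

definition f_bar_subbase :: "'a set \<Rightarrow> ('a \<times> 'a) set set \<Rightarrow> 'a word set set" where
  "f_bar_subbase S B = {{w \<in> carrier (free_group S). f_bar e w \<in> Q} | e Q.
     e \<in> B \<and> openin (discrete_topology (carrier (free_group (S // e)))) Q}"

locale uniform_free_group =
  fixes S :: "'a set" and U :: "('a \<times> 'a) set set" and B :: "('a \<times> 'a) set set"
  assumes uniformity: "uniformity_on_set S U"
    and base: "is_base U B"
    and equiv_base: "\<And>e. e \<in> B \<Longrightarrow> equiv S e"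
begin

abbreviation FS :: "'a word monoid" where "FS \<equiv> free_group S"

sublocale F: group FS by (rule group_free_group)

lemma base_entourage: "e \<in> B \<Longrightarrow> e \<in> U"
  using base by (auto simp: is_base_def)

lemma base_subset: "e \<in> B \<Longrightarrow> e \<subseteq> S \<times> S"
  using equiv_base by (simp add: equiv_def refl_on_def)

lemma base_sym: "e \<in> B \<Longrightarrow> (x, y) \<in> e \<Longrightarrow> (y, x) \<in> e"
  using equiv_base by (auto simp: equiv_def sym_def)

lemma base_nonempty: "B \<noteq> {}"
proof -
  obtain E where "E \<in> U" using uniformity by (auto simp: uniformity_on_set_def)
  then obtain e where "e \<in> B" using base by (auto simp: is_base_def)
  then show ?thesis by blast
qed

lemma base_directed:
  assumes "e1 \<in> B" "e2 \<in> B"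
  shows "\<exists>e3\<in>B. e3 \<subseteq> e1 \<inter> e2"
proof -
  have "\<forall>E\<in>U. \<forall>D\<in>U. E \<inter> D \<in> U"
    using uniformity unfolding uniformity_on_set_def by (rule conjunct1[OF conjunct2[OF conjunct2]])
  then have "e1 \<inter> e2 \<in> U" using base_entourage assms by blast
  then obtain e3 where "e3 \<in> B" "e3 \<subseteq> e1 \<inter> e2" using base unfolding is_base_def by blast
  then show ?thesis by blast
qed

lemma j2_j2s_subset_carrier:
  assumes e: "e \<in> B"
  shows "j2 S e \<union> j2s S e \<subseteq> carrier FS"
proof
  fix a assume "a \<in> j2 S e \<union> j2s S e"
  then obtain x y where xy: "(x, y) \<in> e"
    and a: "a = inv\<^bsub>FS\<^esub> ins x \<otimes>\<^bsub>FS\<^esub> ins y \<or> a = ins x \<otimes>\<^bsub>FS\<^esub> inv\<^bsub>FS\<^esub> ins y"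
    unfolding j2_def j2s_def by blast
  have "x \<in> S" "y \<in> S" using xy base_subset[OF e] by auto
  then have "ins x \<in> carrier FS" "ins y \<in> carrier FS" by (simp_all add: ins_in_carrier)
  then show "a \<in> carrier FS" using a by auto
qed

lemma mem_V_psi_iff:
  "p \<in> V_psi S \<psi> \<longleftrightarrow>
     (\<exists>w\<in>carrier FS. \<exists>a\<in>j2 S (\<psi> w) \<union> j2s S (\<psi> w). p = w \<otimes>\<^bsub>FS\<^esub> a \<otimes>\<^bsub>FS\<^esub> inv\<^bsub>FS\<^esub> w)"
  unfolding V_psi_def by blast

lemma V_psi_subset_carrier:
  assumes \<psi>: "\<psi> \<in> carrier FS \<rightarrow> B"
  shows "V_psi S \<psi> \<subseteq> carrier FS"
proof
  fix p assume "p \<in> V_psi S \<psi>"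
  then obtain w a where w: "w \<in> carrier FS" and a: "a \<in> j2 S (\<psi> w) \<union> j2s S (\<psi> w)"
    and p: "p = w \<otimes>\<^bsub>FS\<^esub> a \<otimes>\<^bsub>FS\<^esub> inv\<^bsub>FS\<^esub> w"
    unfolding mem_V_psi_iff by blast
  have "a \<in> carrier FS" using a j2_j2s_subset_carrier \<psi> w by blast
  then show "p \<in> carrier FS" using w p by simp
qed

lemma subgroup_generate_V_psi: "\<psi> \<in> carrier FS \<rightarrow> B \<Longrightarrow> subgroup (generate FS (V_psi S \<psi>)) FS"
  by (rule F.generate_is_subgroup[OF V_psi_subset_carrier])

lemma eps_tilde_eq_V_psi: "eps_tilde S e = V_psi S (\<lambda>_. e)"
  by (simp add: eps_tilde_def V_psi_def)

lemma j2_j2s_mono: "e \<subseteq> e' \<Longrightarrow> j2 S e \<union> j2s S e \<subseteq> j2 S e' \<union> j2s S e'"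
  unfolding j2_def j2s_def by blast

lemma V_psi_mono:
  assumes "\<And>w. w \<in> carrier FS \<Longrightarrow> \<psi> w \<subseteq> \<psi>' w"
  shows "V_psi S \<psi> \<subseteq> V_psi S \<psi>'"
proof
  fix p assume "p \<in> V_psi S \<psi>"
  then obtain w a where "w \<in> carrier FS" "a \<in> j2 S (\<psi> w) \<union> j2s S (\<psi> w)"
    "p = w \<otimes>\<^bsub>FS\<^esub> a \<otimes>\<^bsub>FS\<^esub> inv\<^bsub>FS\<^esub> w"
    unfolding mem_V_psi_iff by blast
  moreover have "a \<in> j2 S (\<psi>' w) \<union> j2s S (\<psi>' w)" using calculation j2_j2s_mono assms by blast
  ultimately show "p \<in> V_psi S \<psi>'" unfolding mem_V_psi_iff by blast
qed

lemma j2_j2s_subset_V_psi: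
  assumes \<psi>: "\<psi> \<in> carrier FS \<rightarrow> B"
  shows "j2 S (\<psi> \<one>\<^bsub>FS\<^esub>) \<union> j2s S (\<psi> \<one>\<^bsub>FS\<^esub>) \<subseteq> V_psi S \<psi>"
proof
  fix a assume a: "a \<in> j2 S (\<psi> \<one>\<^bsub>FS\<^esub>) \<union> j2s S (\<psi> \<one>\<^bsub>FS\<^esub>)"
  then have "a \<in> carrier FS" using j2_j2s_subset_carrier \<psi> by blast
  then have "a = \<one>\<^bsub>FS\<^esub> \<otimes>\<^bsub>FS\<^esub> a \<otimes>\<^bsub>FS\<^esub> inv\<^bsub>FS\<^esub> \<one>\<^bsub>FS\<^esub>" by simp
  then show "a \<in> V_psi S \<psi>" unfolding mem_V_psi_iff using a by blast
qed

lemma conj_generate_V_psi: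
  assumes g: "g \<in> carrier FS" and \<psi>: "\<psi> \<in> carrier FS \<rightarrow> B"
    and k: "k \<in> generate FS (V_psi S (\<lambda>w. \<psi> (g \<otimes>\<^bsub>FS\<^esub> w)))"
  shows "g \<otimes>\<^bsub>FS\<^esub> k \<otimes>\<^bsub>FS\<^esub> inv\<^bsub>FS\<^esub> g \<in> generate FS (V_psi S \<psi>)"
proof -
  let ?H = "generate FS (V_psi S \<psi>)"
  let ?P = "{k \<in> carrier FS. g \<otimes>\<^bsub>FS\<^esub> k \<otimes>\<^bsub>FS\<^esub> inv\<^bsub>FS\<^esub> g \<in> ?H}"
  have "V_psi S (\<lambda>w. \<psi> (g \<otimes>\<^bsub>FS\<^esub> w)) \<subseteq> ?P"
  proof
    fix p assume "p \<in> V_psi S (\<lambda>w. \<psi> (g \<otimes>\<^bsub>FS\<^esub> w))"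
    then obtain w a where w: "w \<in> carrier FS"
      and a: "a \<in> j2 S (\<psi> (g \<otimes>\<^bsub>FS\<^esub> w)) \<union> j2s S (\<psi> (g \<otimes>\<^bsub>FS\<^esub> w))"
      and p: "p = w \<otimes>\<^bsub>FS\<^esub> a \<otimes>\<^bsub>FS\<^esub> inv\<^bsub>FS\<^esub> w"
      unfolding mem_V_psi_iff by blast
    have gw: "g \<otimes>\<^bsub>FS\<^esub> w \<in> carrier FS" using g w by simp
    have ac: "a \<in> carrier FS" using a j2_j2s_subset_carrier \<psi> gw by blast
    have "(g \<otimes>\<^bsub>FS\<^esub> w) \<otimes>\<^bsub>FS\<^esub> a \<otimes>\<^bsub>FS\<^esub> inv\<^bsub>FS\<^esub> (g \<otimes>\<^bsub>FS\<^esub> w) \<in> V_psi S \<psi>"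
      unfolding mem_V_psi_iff using gw a by blast
    moreover have "(g \<otimes>\<^bsub>FS\<^esub> w) \<otimes>\<^bsub>FS\<^esub> a \<otimes>\<^bsub>FS\<^esub> inv\<^bsub>FS\<^esub> (g \<otimes>\<^bsub>FS\<^esub> w)
        = g \<otimes>\<^bsub>FS\<^esub> p \<otimes>\<^bsub>FS\<^esub> inv\<^bsub>FS\<^esub> g"
      using g w ac p by (simp add: F.inv_mult_group F.m_assoc)
    ultimately have "g \<otimes>\<^bsub>FS\<^esub> p \<otimes>\<^bsub>FS\<^esub> inv\<^bsub>FS\<^esub> g \<in> ?H" by (metis generate.incl)
    moreover have "p \<in> carrier FS" using w ac p by simp
    ultimately show "p \<in> ?P" by simp
  qed
  then have "generate FS (V_psi S (\<lambda>w. \<psi> (g \<otimes>\<^bsub>FS\<^esub> w))) \<subseteq> ?P"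
    by (rule F.generate_subgroup_incl[OF _ F.subgroup_conj_preimage[OF subgroup_generate_V_psi[OF \<psi>] g]])
  then show ?thesis using k by blast
qed

lemma normal_generate_eps_tilde:
  assumes e: "e \<in> B"
  shows "generate FS (eps_tilde S e) \<lhd> FS"
  unfolding eps_tilde_eq_V_psi
proof (rule F.normal_invI)
  show "subgroup (generate FS (V_psi S (\<lambda>_. e))) FS" using subgroup_generate_V_psi e by simp
  fix g k assume "g \<in> carrier FS" "k \<in> generate FS (V_psi S (\<lambda>_. e))"
  then show "g \<otimes>\<^bsub>FS\<^esub> k \<otimes>\<^bsub>FS\<^esub> inv\<^bsub>FS\<^esub> g \<in> generate FS (V_psi S (\<lambda>_. e))"
    using conj_generate_V_psi[of g "\<lambda>_. e"] e by simp
qed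

lemma subgroup_base_generate_V_psi:
  "subgroup_base FS ((\<lambda>\<psi>. generate FS (V_psi S \<psi>)) ` (carrier FS \<rightarrow> B))"
proof (intro subgroup_base.intro subgroup_base_axioms.intro F.is_group)
  fix K assume "K \<in> (\<lambda>\<psi>. generate FS (V_psi S \<psi>)) ` (carrier FS \<rightarrow> B)"
  then show "subgroup K FS" using subgroup_generate_V_psi by blast
next
  obtain e where "e \<in> B" using base_nonempty by blast
  then have "(\<lambda>_. e) \<in> carrier FS \<rightarrow> B" by simp
  then show "(\<lambda>\<psi>. generate FS (V_psi S \<psi>)) ` (carrier FS \<rightarrow> B) \<noteq> {}" by blast
next
  fix K1 K2
  assume K1: "K1 \<in> (\<lambda>\<psi>. generate FS (V_psi S \<psi>)) ` (carrier FS \<rightarrow> B)"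
    and K2: "K2 \<in> (\<lambda>\<psi>. generate FS (V_psi S \<psi>)) ` (carrier FS \<rightarrow> B)"
  obtain \<psi>1 where \<psi>1: "K1 = generate FS (V_psi S \<psi>1)" "\<psi>1 \<in> carrier FS \<rightarrow> B" using K1 by (rule imageE)
  obtain \<psi>2 where \<psi>2: "K2 = generate FS (V_psi S \<psi>2)" "\<psi>2 \<in> carrier FS \<rightarrow> B" using K2 by (rule imageE)
  note \<psi> = \<psi>1(2) \<psi>2(2) \<psi>1(1) \<psi>2(1)
  define \<psi>3 where "\<psi>3 w = (SOME e. e \<in> B \<and> e \<subseteq> \<psi>1 w \<inter> \<psi>2 w)" for w
  have \<psi>3: "\<psi>3 w \<in> B \<and> \<psi>3 w \<subseteq> \<psi>1 w \<inter> \<psi>2 w" if w: "w \<in> carrier FS" for w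
  proof -
    have "\<psi>1 w \<in> B" "\<psi>2 w \<in> B" using \<psi>(1,2) w by auto
    then have "\<exists>e. e \<in> B \<and> e \<subseteq> \<psi>1 w \<inter> \<psi>2 w" using base_directed by blast
    then show ?thesis unfolding \<psi>3_def by (rule someI_ex)
  qed
  then have "\<psi>3 \<in> carrier FS \<rightarrow> B" by blast
  then have "generate FS (V_psi S \<psi>3) \<in> (\<lambda>\<psi>. generate FS (V_psi S \<psi>)) ` (carrier FS \<rightarrow> B)"
    by (rule imageI)
  moreover have "generate FS (V_psi S \<psi>3) \<subseteq> K1" "generate FS (V_psi S \<psi>3) \<subseteq> K2"
    unfolding \<psi>(3,4) using \<psi>3 by (intro F.mono_generate V_psi_mono; simp)+
  ultimately show "\<exists>K3\<in>(\<lambda>\<psi>. generate FS (V_psi S \<psi>)) ` (carrier FS \<rightarrow> B). K3 \<subseteq> K1 \<inter> K2"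
    by blast
next
  fix K g
  assume K: "K \<in> (\<lambda>\<psi>. generate FS (V_psi S \<psi>)) ` (carrier FS \<rightarrow> B)" and g: "g \<in> carrier FS"
  obtain \<psi> where \<psi>': "K = generate FS (V_psi S \<psi>)" "\<psi> \<in> carrier FS \<rightarrow> B" using K by (rule imageE)
  note \<psi> = \<psi>'(2,1)
  have "(\<lambda>w. \<psi> (g \<otimes>\<^bsub>FS\<^esub> w)) \<in> carrier FS \<rightarrow> B" using \<psi>(1) g by auto
  then have "generate FS (V_psi S (\<lambda>w. \<psi> (g \<otimes>\<^bsub>FS\<^esub> w)))
      \<in> (\<lambda>\<psi>. generate FS (V_psi S \<psi>)) ` (carrier FS \<rightarrow> B)" by (rule imageI)
  moreover have "\<forall>k\<in>generate FS (V_psi S (\<lambda>w. \<psi> (g \<otimes>\<^bsub>FS\<^esub> w))). g \<otimes>\<^bsub>FS\<^esub> k \<otimes>\<^bsub>FS\<^esub> inv\<^bsub>FS\<^esub> g \<in> K"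
    using conj_generate_V_psi[OF g \<psi>(1)] \<psi>(2) by blast
  ultimately show "\<exists>K'\<in>(\<lambda>\<psi>. generate FS (V_psi S \<psi>)) ` (carrier FS \<rightarrow> B).
      \<forall>k\<in>K'. g \<otimes>\<^bsub>FS\<^esub> k \<otimes>\<^bsub>FS\<^esub> inv\<^bsub>FS\<^esub> g \<in> K"
    by blast
qed

lemma is_FNA_D:
  assumes "is_FNA S U T"
  shows "nonarch_group FS T" and "unif_continuous S U (two_sided_unif FS T) ins"
    and "\<And>(G :: 'a word set monoid) TG f. nonarch_group G TG \<Longrightarrow> Hausdorff_space TG \<Longrightarrow>
      f \<in> S \<rightarrow> carrier G \<Longrightarrow> unif_continuous S U (two_sided_unif G TG) f \<Longrightarrow>
      \<exists>h. h \<in> hom FS G \<and> continuous_map T TG h \<and> (\<forall>x\<in>S. h (ins x) = f x)"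
proof -
  note FNA = assms[unfolded is_FNA_def]
  show "nonarch_group FS T" using FNA by (rule conjunct1)
  show "unif_continuous S U (two_sided_unif FS T) ins" using FNA by (elim conjE)
  fix G :: "'a word set monoid" and TG f
  assume "nonarch_group G TG" "Hausdorff_space TG" "f \<in> S \<rightarrow> carrier G"
    "unif_continuous S U (two_sided_unif G TG) f"
  with FNA show "\<exists>h. h \<in> hom FS G \<and> continuous_map T TG h \<and> (\<forall>x\<in>S. h (ins x) = f x)"
    by (elim conjE allE impE) blast+
qed

lemma is_FNA_b_D:
  assumes "is_FNA_b S U T"
  shows "nonarch_group FS T" and "balanced_group FS T"
    and "unif_continuous S U (two_sided_unif FS T) ins"
    and "\<And>(G :: 'a word set monoid) TG f. nonarch_group G TG \<Longrightarrow> balanced_group G TG \<Longrightarrow>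
      Hausdorff_space TG \<Longrightarrow> f \<in> S \<rightarrow> carrier G \<Longrightarrow> unif_continuous S U (two_sided_unif G TG) f \<Longrightarrow>
      \<exists>h. h \<in> hom FS G \<and> continuous_map T TG h \<and> (\<forall>x\<in>S. h (ins x) = f x)"
proof -
  note FNA = assms[unfolded is_FNA_b_def]
  show "nonarch_group FS T" using FNA by (rule conjunct1)
  show "balanced_group FS T" using FNA by (elim conjE)
  show "unif_continuous S U (two_sided_unif FS T) ins" using FNA by (elim conjE)
  fix G :: "'a word set monoid" and TG f
  assume "nonarch_group G TG" "balanced_group G TG" "Hausdorff_space TG" "f \<in> S \<rightarrow> carrier G"
    "unif_continuous S U (two_sided_unif G TG) f"
  with FNA show "\<exists>h. h \<in> hom FS G \<and> continuous_map T TG h \<and> (\<forall>x\<in>S. h (ins x) = f x)"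
    by (elim conjE allE impE) blast+
qed

lemma entourage_subset: "D \<in> U \<Longrightarrow> D \<subseteq> S \<times> S"
proof -
  have "\<forall>E\<in>U. E \<subseteq> S \<times> S \<and> Id_on S \<subseteq> E \<and> converse E \<in> U \<and> (\<exists>D\<in>U. relcomp D D \<subseteq> E)"
    using uniformity unfolding uniformity_on_set_def by (rule conjunct1[OF conjunct2])
  then show "D \<in> U \<Longrightarrow> D \<subseteq> S \<times> S" by blast
qed

lemma unif_continuous_quotient_ins:
  assumes \<K>: "subgroup_base FS \<K>" and unif: "\<And>K. K \<in> \<K> \<Longrightarrow> \<exists>e\<in>B. j2 S e \<union> j2s S e \<subseteq> K"
  shows "unif_continuous S U
    (two_sided_unif (FS Mod \<Inter>\<K>) (subgroup_topology (FS Mod \<Inter>\<K>) (quotient_base FS \<K>)))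
    (\<lambda>x. \<Inter>\<K> #>\<^bsub>FS\<^esub> ins x)"
proof (rule subgroup_base.unif_continuous_quotient_map[OF \<K> _ entourage_subset])
  show "ins \<in> S \<rightarrow> carrier FS" using ins_in_carrier by (rule Pi_I)
next
  fix K assume "K \<in> \<K>"
  then obtain e where e: "e \<in> B" "j2 S e \<union> j2s S e \<subseteq> K" using unif by blast
  have "inv\<^bsub>FS\<^esub> ins x \<otimes>\<^bsub>FS\<^esub> ins y \<in> K \<and> ins y \<otimes>\<^bsub>FS\<^esub> inv\<^bsub>FS\<^esub> ins x \<in> K"
    if "(x, y) \<in> e" for x y
    using e(2) that base_sym[OF e(1) that] unfolding j2_def j2s_def by blast
  then show "\<exists>D\<in>U. \<forall>(x, y)\<in>D. inv\<^bsub>FS\<^esub> ins x \<otimes>\<^bsub>FS\<^esub> ins y \<in> K \<and> ins y \<otimes>\<^bsub>FS\<^esub> inv\<^bsub>FS\<^esub> ins x \<in> K"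
    using base_entourage[OF e(1)] by blast
qed

lemma continuous_map_quotient_map:
  assumes N: "N \<lhd> FS" and T: "topspace T = carrier FS"
    and h: "h \<in> hom FS (FS Mod N)" "continuous_map T TQ h" "\<And>x. x \<in> S \<Longrightarrow> h (ins x) = N #>\<^bsub>FS\<^esub> ins x"
  shows "continuous_map T TQ (\<lambda>a. N #>\<^bsub>FS\<^esub> a)"
proof -
  interpret N: normal N FS by (rule N)
  have "h w = N #>\<^bsub>FS\<^esub> w" if "w \<in> carrier FS" for w
    by (rule hom_free_group_eqI[OF N.factorgroup_is_group h(1) N.r_coset_hom_Mod h(3) that])
  then show ?thesis using continuous_map_eq[OF h(2)] T by simp
qed

lemma nbhd1_if_universal:
  assumes T: "topspace T = carrier FS"
    and \<K>: "subgroup_base FS \<K>" and K: "K \<in> \<K>"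
    and univ: "\<exists>h. h \<in> hom FS (FS Mod \<Inter>\<K>)
      \<and> continuous_map T (subgroup_topology (FS Mod \<Inter>\<K>) (quotient_base FS \<K>)) h
      \<and> (\<forall>x\<in>S. h (ins x) = \<Inter>\<K> #>\<^bsub>FS\<^esub> ins x)"
  shows "nbhd1 FS T K"
proof -
  interpret subgroup_base FS \<K> by (rule \<K>)
  from univ obtain h where h: "h \<in> hom FS (FS Mod \<Inter>\<K>)"
    "continuous_map T (subgroup_topology (FS Mod \<Inter>\<K>) (quotient_base FS \<K>)) h"
    "\<And>x. x \<in> S \<Longrightarrow> h (ins x) = \<Inter>\<K> #>\<^bsub>FS\<^esub> ins x"
    by blast
  show ?thesis
    by (rule nbhd1_if_quotient_map_continuous[OF T continuous_map_quotient_map[OF normal_Inter_base T h] K])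
qed

lemma quotient_ins_in_carrier:
  "N \<lhd> FS \<Longrightarrow> (\<lambda>x. N #>\<^bsub>FS\<^esub> ins x) \<in> S \<rightarrow> carrier (FS Mod N)"
  by (intro Pi_I group_hom.hom_closed[OF normal.group_hom_Mod] ins_in_carrier)

text \<open>The quotient \<open>FS Mod \<Inter>\<K>\<close> is a group of sets of words, hence an admissible target
  of the universal properties in \<open>is_FNA\<close> and \<open>is_FNA_b\<close>.\<close>

lemma nbhd1_of_FNA:
  assumes FNA: "is_FNA S U T" and \<K>: "subgroup_base FS \<K>" and K: "K \<in> \<K>"
    and unif: "\<And>K. K \<in> \<K> \<Longrightarrow> \<exists>e\<in>B. j2 S e \<union> j2s S e \<subseteq> K"
  shows "nbhd1 FS T K"
proof -
  interpret subgroup_base FS \<K> by (rule \<K>)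
  interpret Q: subgroup_base "FS Mod \<Inter>\<K>" "quotient_base FS \<K>" by (rule subgroup_base_quotient)
  show ?thesis
  proof (rule nbhd1_if_universal[OF _ \<K> K])
    show "topspace T = carrier FS"
      using is_FNA_D(1)[OF FNA] by (simp add: nonarch_group_def topgroup_def)
    show "\<exists>h. h \<in> hom FS (FS Mod \<Inter>\<K>)
        \<and> continuous_map T (subgroup_topology (FS Mod \<Inter>\<K>) (quotient_base FS \<K>)) h
        \<and> (\<forall>x\<in>S. h (ins x) = \<Inter>\<K> #>\<^bsub>FS\<^esub> ins x)"
      by (rule is_FNA_D(3)[OF FNA Q.nonarch_group_subgroup_topology
          Q.Hausdorff_subgroup_topology[OF Inter_quotient_base]
          quotient_ins_in_carrier[OF normal_Inter_base] unif_continuous_quotient_ins[OF \<K> unif]])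
  qed
qed

lemma nbhd1_of_FNA_b:
  assumes FNA: "is_FNA_b S U T" and \<K>: "subgroup_base FS \<K>" and K: "K \<in> \<K>"
    and normal: "\<And>K. K \<in> \<K> \<Longrightarrow> K \<lhd> FS"
    and unif: "\<And>K. K \<in> \<K> \<Longrightarrow> \<exists>e\<in>B. j2 S e \<union> j2s S e \<subseteq> K"
  shows "nbhd1 FS T K"
proof -
  interpret subgroup_base FS \<K> by (rule \<K>)
  interpret Q: subgroup_base "FS Mod \<Inter>\<K>" "quotient_base FS \<K>" by (rule subgroup_base_quotient)
  show ?thesis
  proof (rule nbhd1_if_universal[OF _ \<K> K])
    show "topspace T = carrier FS"
      using is_FNA_b_D(1)[OF FNA] by (simp add: nonarch_group_def topgroup_def)
    show "\<exists>h. h \<in> hom FS (FS Mod \<Inter>\<K>)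
        \<and> continuous_map T (subgroup_topology (FS Mod \<Inter>\<K>) (quotient_base FS \<K>)) h
        \<and> (\<forall>x\<in>S. h (ins x) = \<Inter>\<K> #>\<^bsub>FS\<^esub> ins x)"
      by (rule is_FNA_b_D(4)[OF FNA Q.nonarch_group_subgroup_topology
          Q.balanced_subgroup_topology[OF normal_quotient_base[OF normal]]
          Q.Hausdorff_subgroup_topology[OF Inter_quotient_base]
          quotient_ins_in_carrier[OF normal_Inter_base] unif_continuous_quotient_ins[OF \<K> unif]])
  qed
qed

lemma j2_j2s_subset_open_subgroup:
  assumes NA: "nonarch_group FS T" and uc: "unif_continuous S U (two_sided_unif FS T) ins"
    and K: "subgroup K FS" "openin T K"
  shows "\<exists>e\<in>B. j2 S e \<union> j2s S e \<subseteq> K"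
proof -
  interpret topological_group FS T by (rule topological_group_if_nonarch[OF NA])
  let ?E = "{(g, h). g \<in> carrier FS \<and> h \<in> carrier FS
      \<and> inv\<^bsub>FS\<^esub> g \<otimes>\<^bsub>FS\<^esub> h \<in> K \<and> h \<otimes>\<^bsub>FS\<^esub> inv\<^bsub>FS\<^esub> g \<in> K}"
  have "?E \<in> two_sided_unif FS T"
    unfolding two_sided_unif_def by (intro CollectI conjI exI[of _ K] nbhd1_subgroupI K) auto
  then obtain D where D: "D \<in> U" "\<forall>(x, y)\<in>D. (ins x, ins y) \<in> ?E"
    using uc unfolding unif_continuous_def by blast
  obtain e where e: "e \<in> B" "e \<subseteq> D" using D(1) base unfolding is_base_def by blast
  have "j2 S e \<union> j2s S e \<subseteq> K"
  proof
    fix a assume "a \<in> j2 S e \<union> j2s S e"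
    then obtain x y where xy: "(x, y) \<in> e"
      and a: "a = inv\<^bsub>FS\<^esub> ins x \<otimes>\<^bsub>FS\<^esub> ins y \<or> a = ins x \<otimes>\<^bsub>FS\<^esub> inv\<^bsub>FS\<^esub> ins y"
      unfolding j2_def j2s_def by blast
    have "(x, y) \<in> D" "(y, x) \<in> D" using e(2) xy base_sym[OF e(1) xy] by blast+
    then have "(ins x, ins y) \<in> ?E" "(ins y, ins x) \<in> ?E" using D(2) by blast+
    then show "a \<in> K" using a by blast
  qed
  then show ?thesis using e(1) by blast
qed

lemma generate_V_psi_subset_nbhd1:
  assumes FNA: "is_FNA S U T" and N: "nbhd1 FS T N"
  shows "\<exists>\<psi>\<in>carrier FS \<rightarrow> B. generate FS (V_psi S \<psi>) \<subseteq> N"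
proof -
  note NA = is_FNA_D(1)[OF FNA]
  interpret topological_group FS T by (rule topological_group_if_nonarch[OF NA])
  obtain H where H: "subgroup H FS" "openin T H" "H \<subseteq> N"
    using NA N unfolding nonarch_group_def by blast
  have "\<exists>e\<in>B. j2 S e \<union> j2s S e \<subseteq> {k \<in> carrier FS. w \<otimes>\<^bsub>FS\<^esub> k \<otimes>\<^bsub>FS\<^esub> inv\<^bsub>FS\<^esub> w \<in> H}"
    if w: "w \<in> carrier FS" for w
    by (rule j2_j2s_subset_open_subgroup[OF NA is_FNA_D(2)[OF FNA]
          F.subgroup_conj_preimage[OF H(1) w] openin_conj_preimage[OF w H(2)]])
  then have "\<forall>w\<in>carrier FS. \<exists>e. e \<in> B \<and>
      j2 S e \<union> j2s S e \<subseteq> {k \<in> carrier FS. w \<otimes>\<^bsub>FS\<^esub> k \<otimes>\<^bsub>FS\<^esub> inv\<^bsub>FS\<^esub> w \<in> H}"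
    by blast
  from bchoice[OF this] obtain \<psi> where \<psi>: "\<forall>w\<in>carrier FS. \<psi> w \<in> B \<and>
      j2 S (\<psi> w) \<union> j2s S (\<psi> w) \<subseteq> {k \<in> carrier FS. w \<otimes>\<^bsub>FS\<^esub> k \<otimes>\<^bsub>FS\<^esub> inv\<^bsub>FS\<^esub> w \<in> H}"
    by blast
  have "V_psi S \<psi> \<subseteq> H"
  proof
    fix p assume "p \<in> V_psi S \<psi>"
    then obtain w a where "w \<in> carrier FS" "a \<in> j2 S (\<psi> w) \<union> j2s S (\<psi> w)"
      "p = w \<otimes>\<^bsub>FS\<^esub> a \<otimes>\<^bsub>FS\<^esub> inv\<^bsub>FS\<^esub> w"
      unfolding mem_V_psi_iff by blast
    then show "p \<in> H" using \<psi> by blast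
  qed
  then have "generate FS (V_psi S \<psi>) \<subseteq> N"
    using F.generate_subgroup_incl[OF _ H(1)] H(3) by blast
  moreover have "\<psi> \<in> carrier FS \<rightarrow> B" using \<psi> by blast
  ultimately show ?thesis by blast
qed

lemma nbhd1_generate_V_psi:
  assumes FNA: "is_FNA S U T" and \<psi>: "\<psi> \<in> carrier FS \<rightarrow> B"
  shows "nbhd1 FS T (generate FS (V_psi S \<psi>))"
proof (rule nbhd1_of_FNA[OF FNA subgroup_base_generate_V_psi])
  show "generate FS (V_psi S \<psi>) \<in> (\<lambda>\<psi>. generate FS (V_psi S \<psi>)) ` (carrier FS \<rightarrow> B)"
    using \<psi> by (rule imageI)
next
  fix K assume "K \<in> (\<lambda>\<psi>. generate FS (V_psi S \<psi>)) ` (carrier FS \<rightarrow> B)"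
  then obtain \<phi> where \<phi>: "K = generate FS (V_psi S \<phi>)" "\<phi> \<in> carrier FS \<rightarrow> B" by (rule imageE)
  have "j2 S (\<phi> \<one>\<^bsub>FS\<^esub>) \<union> j2s S (\<phi> \<one>\<^bsub>FS\<^esub>) \<subseteq> K"
    using j2_j2s_subset_V_psi[OF \<phi>(2)] generate.incl[of _ "V_psi S \<phi>" FS] \<phi>(1) by blast
  moreover have "\<phi> \<one>\<^bsub>FS\<^esub> \<in> B" using \<phi>(2) by blast
  ultimately show "\<exists>e\<in>B. j2 S e \<union> j2s S e \<subseteq> K" by blast
qed

lemma j2_j2s_subset_generate_eps_tilde:
  "e \<in> B \<Longrightarrow> j2 S e \<union> j2s S e \<subseteq> generate FS (eps_tilde S e)"
  using j2_j2s_subset_V_psi[of "\<lambda>_. e"] generate.incl[of _ "V_psi S (\<lambda>_. e)" FS]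
  unfolding eps_tilde_eq_V_psi by auto

lemma nbhd1_generate_eps_tilde:
  assumes FNA: "is_FNA_b S U T" and e: "e \<in> B"
  shows "nbhd1 FS T (generate FS (eps_tilde S e))"
proof -
  let ?M = "generate FS (eps_tilde S e)"
  have M: "?M \<lhd> FS" by (rule normal_generate_eps_tilde[OF e])
  have "subgroup_base FS {?M}"
    by (intro subgroup_base.intro subgroup_base_axioms.intro F.is_group)
      (auto simp: normal_imp_subgroup[OF M] intro: normal.inv_op_closed2[OF M])
  then show ?thesis
    using nbhd1_of_FNA_b[OF FNA _ singletonI] M j2_j2s_subset_generate_eps_tilde[OF e] e by blast
qed

lemma generate_eps_tilde_subset_nbhd1:
  assumes FNA: "is_FNA_b S U T" and N: "nbhd1 FS T N"
  shows "\<exists>e\<in>B. generate FS (eps_tilde S e) \<subseteq> N"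
proof -
  note NA = is_FNA_b_D(1)[OF FNA]
  interpret topological_group FS T by (rule topological_group_if_nonarch[OF NA])
  obtain H where H: "subgroup H FS" "openin T H" "H \<subseteq> N"
    using NA N unfolding nonarch_group_def by blast
  obtain V where V: "nbhd1 FS T V" "\<And>w v. w \<in> carrier FS \<Longrightarrow> v \<in> V \<Longrightarrow> w \<otimes>\<^bsub>FS\<^esub> v \<otimes>\<^bsub>FS\<^esub> inv\<^bsub>FS\<^esub> w \<in> H"
    using conj_nbhd1_if_balanced[OF is_FNA_b_D(2)[OF FNA] nbhd1_subgroupI[OF H(1,2)]] by blast
  obtain K where K: "subgroup K FS" "openin T K" "K \<subseteq> V"
    using NA V(1) unfolding nonarch_group_def by blast
  obtain e where e: "e \<in> B" "j2 S e \<union> j2s S e \<subseteq> K"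
    using j2_j2s_subset_open_subgroup[OF NA is_FNA_b_D(3)[OF FNA] K(1,2)] by blast
  have "eps_tilde S e \<subseteq> H"
  proof
    fix p assume "p \<in> eps_tilde S e"
    then obtain w a where "w \<in> carrier FS" "a \<in> j2 S e \<union> j2s S e"
      "p = w \<otimes>\<^bsub>FS\<^esub> a \<otimes>\<^bsub>FS\<^esub> inv\<^bsub>FS\<^esub> w"
      unfolding eps_tilde_eq_V_psi mem_V_psi_iff by blast
    then show "p \<in> H" using V(2) e(2) K(3) by blast
  qed
  then have "generate FS (eps_tilde S e) \<subseteq> N"
    using F.generate_subgroup_incl[OF _ H(1)] H(3) by blast
  then show ?thesis using e(1) by blast
qed

lemma f_quot_in_quotient: "f_quot e \<in> S \<rightarrow> S // e"
  by (auto simp: f_quot_def quotient_def)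

lemma group_hom_f_bar: "group_hom FS (free_group (S // e)) (f_bar e)"
  by (intro group_hom.intro group_hom_axioms.intro F.is_group group_free_group)
    (simp add: f_bar_eq_map_word map_word_hom f_quot_in_quotient)

lemma f_bar_ins: "f_bar e (ins x) = ins (f_quot e x)"
  by (simp add: f_bar_eq_map_word map_word_def ins_def)

lemma f_bar_j2_j2s:
  assumes e: "e \<in> B" and a: "a \<in> j2 S e \<union> j2s S e"
  shows "f_bar e a = []"
proof -
  interpret \<phi>: group_hom FS "free_group (S // e)" "f_bar e" by (rule group_hom_f_bar)
  obtain x y where xy: "(x, y) \<in> e"
    and a: "a = inv\<^bsub>FS\<^esub> ins x \<otimes>\<^bsub>FS\<^esub> ins y \<or> a = ins x \<otimes>\<^bsub>FS\<^esub> inv\<^bsub>FS\<^esub> ins y"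
    using a unfolding j2_def j2s_def by blast
  have "x \<in> S" "y \<in> S" using xy base_subset[OF e] by auto
  then have ins: "ins x \<in> carrier FS" "ins y \<in> carrier FS" by (simp_all add: ins_in_carrier)
  have "f_bar e (ins x) = f_bar e (ins y)"
    using equiv_class_eq[OF equiv_base[OF e] xy] by (simp add: f_bar_ins f_quot_def)
  then show ?thesis using a ins by (auto simp: free_group_one)
qed

lemma coset_map_word_eq:
  assumes e: "e \<in> B" and r: "\<And>x. x \<in> S \<Longrightarrow> (x, r x) \<in> e" and w: "w \<in> carrier FS"
  shows "generate FS (eps_tilde S e) #>\<^bsub>FS\<^esub> map_word r w = generate FS (eps_tilde S e) #>\<^bsub>FS\<^esub> w"
    (is "?M #>\<^bsub>FS\<^esub> _ = _")
proof -
  interpret M: normal ?M FS by (rule normal_generate_eps_tilde[OF e])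
  have rS: "r \<in> S \<rightarrow> S" using r base_subset[OF e] by blast
  show ?thesis
  proof (rule hom_free_group_eqI[OF M.factorgroup_is_group _ M.r_coset_hom_Mod _ w])
    show "(\<lambda>w. ?M #>\<^bsub>FS\<^esub> map_word r w) \<in> hom FS (FS Mod ?M)"
      using hom_compose[OF map_word_hom[OF rS] M.r_coset_hom_Mod] by (simp add: comp_def)
  next
    fix x assume x: "x \<in> S"
    have rx: "r x \<in> S" using rS x by blast
    have "ins (r x) \<otimes>\<^bsub>FS\<^esub> inv\<^bsub>FS\<^esub> ins x \<in> ?M"
      using j2_j2s_subset_generate_eps_tilde[OF e] base_sym[OF e r[OF x]] unfolding j2s_def by blast
    then have "ins (r x) \<in> ?M #>\<^bsub>FS\<^esub> ins x"
      by (rule M.rcos_module_rev[OF F.is_group ins_in_carrier[OF x] ins_in_carrier[OF rx]])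
    then have "?M #>\<^bsub>FS\<^esub> ins x = ?M #>\<^bsub>FS\<^esub> ins (r x)"
      by (rule F.repr_independence[OF _ ins_in_carrier[OF x] M.subgroup_axioms])
    moreover have "map_word r (ins x) = ins (r x)" by (simp add: map_word_def ins_def)
    ultimately show "?M #>\<^bsub>FS\<^esub> map_word r (ins x) = ?M #>\<^bsub>FS\<^esub> ins x" by simp
  qed
qed

lemma kernel_f_bar:
  assumes e: "e \<in> B"
  shows "kernel FS (free_group (S // e)) (f_bar e) = generate FS (eps_tilde S e)"
    (is "?ker = ?M")
proof
  interpret \<phi>: group_hom FS "free_group (S // e)" "f_bar e" by (rule group_hom_f_bar)
  have "eps_tilde S e \<subseteq> ?ker"
  proof
    fix p assume "p \<in> eps_tilde S e"
    then obtain w a where w: "w \<in> carrier FS" and a: "a \<in> j2 S e \<union> j2s S e"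
      and p: "p = w \<otimes>\<^bsub>FS\<^esub> a \<otimes>\<^bsub>FS\<^esub> inv\<^bsub>FS\<^esub> w"
      unfolding eps_tilde_eq_V_psi mem_V_psi_iff by blast
    have "a \<in> ?ker"
      using a j2_j2s_subset_carrier[OF e] f_bar_j2_j2s[OF e a] by (auto simp: kernel_def free_group_one)
    then show "p \<in> ?ker" using normal.inv_op_closed2[OF \<phi>.normal_kernel w] p by simp
  qed
  then show "?M \<subseteq> ?ker" by (rule F.generate_subgroup_incl[OF _ \<phi>.subgroup_kernel])
next
  interpret M: normal ?M FS by (rule normal_generate_eps_tilde[OF e])
  txt \<open>\<open>r\<close> picks a representative in every \<open>e\<close>-class, so \<open>map_word r\<close> factors through
    \<open>f_bar e\<close>, while it moves each generator only within its class, that is, modulo \<open>?M\<close>.\<close>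
  define \<sigma> where "\<sigma> C = (SOME y. y \<in> C)" for C :: "'a set"
  define r where "r = \<sigma> \<circ> f_quot e"
  have r: "(x, r x) \<in> e" if x: "x \<in> S" for x
  proof -
    have "x \<in> f_quot e x" using x equiv_base[OF e] by (auto simp: f_quot_def equiv_def refl_on_def)
    then have "r x \<in> f_quot e x" unfolding r_def \<sigma>_def o_def by (rule someI)
    then show ?thesis by (simp add: f_quot_def)
  qed
  show "?ker \<subseteq> ?M"
  proof
    fix k assume "k \<in> ?ker"
    then have k: "k \<in> carrier FS" "f_bar e k = []" by (simp_all add: kernel_def free_group_one)
    have "map_word r k = map_word \<sigma> (f_bar e k)"
      by (simp add: r_def f_bar_eq_map_word map_word_map_word)
    also have "\<dots> = \<one>\<^bsub>FS\<^esub>" using k(2) by (simp add: map_word_def free_group_one)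
    finally have "?M #>\<^bsub>FS\<^esub> k = ?M"
      using coset_map_word_eq[OF e r k(1)] F.coset_mult_one[OF M.subset] by simp
    then show "k \<in> ?M" using F.rcos_self[OF k(1) M.subgroup_axioms] by simp
  qed
qed

lemma f_bar_fiber:
  assumes "e \<in> B" and "p \<in> carrier FS"
  shows "{w \<in> carrier FS. f_bar e w = f_bar e p} = p <#\<^bsub>FS\<^esub> generate FS (eps_tilde S e)"
  using group_hom.fiber_eq_l_coset_kernel[OF group_hom_f_bar assms(2)] kernel_f_bar[OF assms(1)]
  by simp

lemma openin_FNA_b_iff:
  assumes FNA: "is_FNA_b S U T"
  shows "openin T A \<longleftrightarrow>
    A \<subseteq> carrier FS \<and> (\<forall>p\<in>A. \<exists>e\<in>B. p <#\<^bsub>FS\<^esub> generate FS (eps_tilde S e) \<subseteq> A)"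
proof -
  interpret topological_group FS T by (rule topological_group_if_nonarch[OF is_FNA_b_D(1)[OF FNA]])
  let ?M = "\<lambda>e. generate FS (eps_tilde S e)"
  have "openin T A \<longleftrightarrow> A \<subseteq> carrier FS \<and> (\<forall>p\<in>A. \<exists>M\<in>?M ` B. p <#\<^bsub>FS\<^esub> M \<subseteq> A)"
  proof (rule openin_iff_l_cosets)
    fix M assume "M \<in> ?M ` B"
    then obtain e where "M = ?M e" "e \<in> B" by (rule imageE)
    then show "nbhd1 FS T M" using nbhd1_generate_eps_tilde[OF FNA] by simp
  next
    fix V assume "nbhd1 FS T V"
    then obtain e where "e \<in> B" "?M e \<subseteq> V" using generate_eps_tilde_subset_nbhd1[OF FNA] by blast
    then show "\<exists>M\<in>?M ` B. M \<subseteq> V" by blast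
  qed
  then show ?thesis by (auto dest: bex_imageD)
qed

lemma fiber_in_f_bar_subbase:
  assumes "e \<in> B" and "p \<in> carrier FS"
  shows "{w \<in> carrier FS. f_bar e w = f_bar e p} \<in> f_bar_subbase S B"
proof -
  have "f_bar e p \<in> carrier (free_group (S // e))"
    using group_hom.hom_closed[OF group_hom_f_bar assms(2)] .
  then have "openin (discrete_topology (carrier (free_group (S // e)))) {f_bar e p}" by simp
  moreover have "{w \<in> carrier FS. f_bar e w = f_bar e p} = {w \<in> carrier FS. f_bar e w \<in> {f_bar e p}}"
    by simp
  ultimately show ?thesis using assms(1) unfolding f_bar_subbase_def by blast
qed

lemma generate_topology_on_f_bar_subbase:
  assumes FNA: "is_FNA_b S U T" and A: "openin T A"
  shows "generate_topology_on (f_bar_subbase S B) A"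
proof -
  let ?M = "\<lambda>e. generate FS (eps_tilde S e)"
  have Ac: "A \<subseteq> carrier FS" and "\<forall>p\<in>A. \<exists>e\<in>B. p <#\<^bsub>FS\<^esub> ?M e \<subseteq> A"
    using A unfolding openin_FNA_b_iff[OF FNA] by blast+
  then obtain E where E: "\<And>p. p \<in> A \<Longrightarrow> E p \<in> B \<and> p <#\<^bsub>FS\<^esub> ?M (E p) \<subseteq> A"
    by metis
  let ?F = "\<lambda>p. {w \<in> carrier FS. f_bar (E p) w = f_bar (E p) p}"
  have F: "?F p = p <#\<^bsub>FS\<^esub> ?M (E p)" if "p \<in> A" for p
    using f_bar_fiber[of "E p" p] E[OF that] Ac that by auto
  have "A = \<Union>(?F ` A)"
  proof
    show "A \<subseteq> \<Union>(?F ` A)" using Ac by auto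
    show "\<Union>(?F ` A) \<subseteq> A" using F E by auto
  qed
  moreover have "generate_topology_on (f_bar_subbase S B) (\<Union>(?F ` A))"
  proof (rule generate_topology_on.UN)
    fix k assume "k \<in> ?F ` A"
    then obtain p where k: "k = ?F p" and p: "p \<in> A" by (rule imageE)
    have "E p \<in> B" "p \<in> carrier FS" using E[OF p] Ac p by auto
    then have "k \<in> f_bar_subbase S B" unfolding k by (rule fiber_in_f_bar_subbase)
    then show "generate_topology_on (f_bar_subbase S B) k" by (rule generate_topology_on.Basis)
  qed
  ultimately show ?thesis by simp
qed

lemma openin_if_generate_topology_on_f_bar_subbase:
  assumes FNA: "is_FNA_b S U T" and A: "generate_topology_on (f_bar_subbase S B) A"
  shows "openin T A"
  using A
proof (induction rule: generate_topology_on.induct)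
  case (Basis s)
  then obtain e Q where e: "e \<in> B" and s: "s = {w \<in> carrier FS. f_bar e w \<in> Q}"
    unfolding f_bar_subbase_def by blast
  have "p <#\<^bsub>FS\<^esub> generate FS (eps_tilde S e) \<subseteq> s" if p: "p \<in> s" for p
  proof -
    have pc: "p \<in> carrier FS" and pQ: "f_bar e p \<in> Q" using p s by auto
    show ?thesis unfolding f_bar_fiber[OF e pc, symmetric] s using pQ by auto
  qed
  then show ?case unfolding openin_FNA_b_iff[OF FNA] using e s by blast
qed auto

lemma topology_FNA_b_eq_weak_topology:
  "is_FNA_b S U T \<Longrightarrow> T = topology_generated_by (f_bar_subbase S B)"
  unfolding topology_eq openin_topology_generated_by_iff
  using generate_topology_on_f_bar_subbase openin_if_generate_topology_on_f_bar_subbase by blast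

end

theorem theorem4p13:
  fixes S :: "'a set" and U :: "('a \<times> 'a) set set" and B :: "('a \<times> 'a) set set"
  assumes unif: "uniformity_on_set S U"
    and base: "is_base U B"
    and equivs: "\<forall>e\<in>B. equiv S e"
  shows
    "(\<forall>T. is_FNA S U T \<longrightarrow>
        (\<forall>\<psi> \<in> carrier (free_group S) \<rightarrow> B.
            subgroup (generate (free_group S) (V_psi S \<psi>)) (free_group S) \<and>
            nbhd1 (free_group S) T (generate (free_group S) (V_psi S \<psi>))) \<and>
        (\<forall>N. nbhd1 (free_group S) T N \<longrightarrow>
            (\<exists>\<psi> \<in> carrier (free_group S) \<rightarrow> B. generate (free_group S) (V_psi S \<psi>) \<subseteq> N)))
     \<and>
     (\<forall>T. is_FNA_b S U T \<longrightarrow>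
        ((\<forall>e\<in>B. generate (free_group S) (eps_tilde S e) \<lhd> free_group S \<and>
                nbhd1 (free_group S) T (generate (free_group S) (eps_tilde S e))) \<and>
         (\<forall>N. nbhd1 (free_group S) T N \<longrightarrow>
            (\<exists>e\<in>B. generate (free_group S) (eps_tilde S e) \<subseteq> N))) \<and>
        T = topology_generated_by
              {{w \<in> carrier (free_group S). f_bar e w \<in> Q} | e Q.
                 e \<in> B \<and> openin (discrete_topology (carrier (free_group (S // e)))) Q})"
proof -
  interpret uniform_free_group S U B
    using unif base equivs by (simp add: uniform_free_group_def)
  show ?thesis
    by (intro conjI allI impI ballI subgroup_generate_V_psi nbhd1_generate_V_psi
        generate_V_psi_subset_nbhd1 normal_generate_eps_tilde nbhd1_generate_eps_tilde
        generate_eps_tilde_subset_nbhd1 topology_FNA_b_eq_weak_topology[unfolded f_bar_subbase_def])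
      assumption+
qed

end
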